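(* Let $K$ be a perfect field with $\mathrm{char}(K)\neq 2$ and algebraic closure $K_a$. Suppose that $E\subset\mathbb{P}^2$ is an absolutely irreducible cubic curve defined over $K$, and that $B\subset E(K_a)$ is a $7$-element set which is a $\mathrm{Gal}(K)$-orbit. Assume that the image $G_B$ of $\mathrm{Gal}(K)$ in the group $\mathrm{Perm}(B)$ of all permutations of $B$ is either $\mathrm{Perm}(B)\cong\mathbf{S}_7$ or the alternating group $\mathbf{A}_7$. Then $B$ is in general position, i.e. no three points of $B$ lie on a line and no six points of $B$ lie on a conic. *)

theory Defs
  imports "HOL-Computational_Algebra.Polynomial" "HOL-Combinatorics.Permutations"
begin

text \<open>Ambient field 'a plays the role of the algebraic closure K_a; K is a subset of it.
Points of the projective plane P^2(K_a) are represented by nonzero homogeneous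
coordinate triples, two triples representing the same point iff proportional.\<close>

type_synonym 'a pt = "'a \<times> 'a \<times> 'a"

definition subfield :: "'a::field set \<Rightarrow> bool" where
  "subfield K \<longleftrightarrow> 0 \<in> K \<and> 1 \<in> K \<and> (\<forall>x\<in>K. \<forall>y\<in>K. x + y \<in> K \<and> x * y \<in> K)
     \<and> (\<forall>x\<in>K. - x \<in> K \<and> inverse x \<in> K)"

definition algebraically_closed :: "'a::field itself \<Rightarrow> bool" where
  "algebraically_closed _ \<longleftrightarrow> (\<forall>p :: 'a poly. degree p > 0 \<longrightarrow> (\<exists>x. poly p x = 0))"

definition algebraic_over :: "'a::field set \<Rightarrow> 'a \<Rightarrow> bool" where
  "algebraic_over K x \<longleftrightarrow> (\<exists>p. p \<noteq> 0 \<and> (\<forall>i. coeff p i \<in> K) \<and> poly p x = 0)"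

definition is_algebraic_closure_of :: "'a::field set \<Rightarrow> bool" where
  "is_algebraic_closure_of K \<longleftrightarrow> subfield K \<and> algebraically_closed TYPE('a) \<and> (\<forall>x. algebraic_over K x)"

definition perfect_subfield :: "'a::field set \<Rightarrow> bool" where
  "perfect_subfield K \<longleftrightarrow>
     (\<forall>p::nat. prime p \<and> of_nat p = (0::'a) \<longrightarrow> (\<forall>x\<in>K. \<exists>y\<in>K. y ^ p = x))"

definition field_aut :: "('a::field \<Rightarrow> 'a) \<Rightarrow> bool" where
  "field_aut \<sigma> \<longleftrightarrow> bij \<sigma> \<and> (\<forall>x y. \<sigma> (x + y) = \<sigma> x + \<sigma> y) \<and> (\<forall>x y. \<sigma> (x * y) = \<sigma> x * \<sigma> y)"

definition Gal :: "'a::field set \<Rightarrow> ('a \<Rightarrow> 'a) set" where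
  "Gal K = {\<sigma>. field_aut \<sigma> \<and> (\<forall>x\<in>K. \<sigma> x = x)}"

definition pt_map :: "('a \<Rightarrow> 'a) \<Rightarrow> 'a pt \<Rightarrow> 'a pt" where
  "pt_map \<sigma> v = (\<sigma> (fst v), \<sigma> (fst (snd v)), \<sigma> (snd (snd v)))"

definition proportional :: "'a::field pt \<Rightarrow> 'a pt \<Rightarrow> bool" where
  "proportional v w \<longleftrightarrow> (\<exists>c. c \<noteq> 0 \<and> v = (c * fst w, c * fst (snd w), c * snd (snd w)))"

definition mons :: "nat \<Rightarrow> (nat \<times> nat \<times> nat) set" where
  "mons d = {(i, j, k). i + j + k = d}"

definition form_eval :: "nat \<Rightarrow> (nat \<times> nat \<times> nat \<Rightarrow> 'a::field) \<Rightarrow> 'a pt \<Rightarrow> 'a" where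
  "form_eval d c v = (\<Sum>(i, j, k)\<in>mons d. c (i, j, k) * fst v ^ i * fst (snd v) ^ j * snd (snd v) ^ k)"

definition nonzero_form :: "nat \<Rightarrow> (nat \<times> nat \<times> nat \<Rightarrow> 'a::field) \<Rightarrow> bool" where
  "nonzero_form d c \<longleftrightarrow> (\<exists>m\<in>mons d. c m \<noteq> 0)"

text \<open>A cubic form is absolutely irreducible iff it does not factor over K_a into
forms of positive degree; for degree 3 the only possible factorization is linear times quadratic.
Forms over the infinite field K_a are identified with their polynomial functions.\<close>
definition abs_irreducible_cubic :: "(nat \<times> nat \<times> nat \<Rightarrow> 'a::field) \<Rightarrow> bool" where
  "abs_irreducible_cubic c \<longleftrightarrow> nonzero_form 3 c \<and>
     \<not> (\<exists>l q. nonzero_form 1 l \<and> nonzero_form 2 q \<and>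
            (\<forall>v. form_eval 3 c v = form_eval 1 l v * form_eval 2 q v))"

definition curve_points :: "(nat \<times> nat \<times> nat \<Rightarrow> 'a::field) \<Rightarrow> 'a pt set" where
  "curve_points c = {v. v \<noteq> (0, 0, 0) \<and> form_eval 3 c v = 0}"

definition distinct_proj_points :: "'a::field pt set \<Rightarrow> bool" where
  "distinct_proj_points B \<longleftrightarrow> (\<forall>b\<in>B. b \<noteq> (0, 0, 0)) \<and>
     (\<forall>b\<in>B. \<forall>b'\<in>B. proportional b b' \<longrightarrow> b = b')"

definition gal_orbit :: "'a::field set \<Rightarrow> 'a pt set \<Rightarrow> bool" where
  "gal_orbit K B \<longleftrightarrow> B \<noteq> {} \<and>
     (\<forall>\<sigma>\<in>Gal K. \<forall>b\<in>B. \<exists>b'\<in>B. proportional (pt_map \<sigma> b) b') \<and>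
     (\<forall>b\<in>B. \<forall>b'\<in>B. \<exists>\<sigma>\<in>Gal K. proportional (pt_map \<sigma> b) b')"

definition gal_image :: "'a::field set \<Rightarrow> 'a pt set \<Rightarrow> ('a pt \<Rightarrow> 'a pt) set" where
  "gal_image K B = {\<pi>. \<pi> permutes B \<and>
     (\<exists>\<sigma>\<in>Gal K. \<forall>b\<in>B. proportional (pt_map \<sigma> b) (\<pi> b))}"

definition general_position :: "'a::field pt set \<Rightarrow> bool" where
  "general_position B \<longleftrightarrow>
     (\<forall>S\<subseteq>B. card S = 3 \<longrightarrow> \<not> (\<exists>l. nonzero_form 1 l \<and> (\<forall>v\<in>S. form_eval 1 l v = 0))) \<and>
     (\<forall>S\<subseteq>B. card S = 6 \<longrightarrow> \<not> (\<exists>q. nonzero_form 2 q \<and> (\<forall>v\<in>S. form_eval 2 q v = 0)))"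

end

(*
  If sigma in Gal(K) realises the permutation pi of B, applying sigma to the coefficients of a
  form vanishing on S, a subset of B, gives a form of the same degree vanishing on pi(S). As the
  image of Gal(K) contains A_7, and hence all 3-cycles, three collinear points p, q, r of B give
  for every x in B a line through p, q and x, so all of B lies on the line pq. Likewise six
  points of B on a conic give a conic through every six of the seven points, and two of these
  conics already force all seven points onto one conic. Both conclusions contradict Bezout for
  the absolutely irreducible cubic E: it meets a line in at most 3 points, and a conic in at
  most 6 points of which no three are collinear. These bounds are proved in coordinates adapted
  to points of E, where the line is z = 0 and the conic is ayz + bxz + cxy = 0: restricted to
  the parametrised line or conic, the equation of E becomes a polynomial with more roots than
  its degree, so the line or the conic is a component of E.
*)
theory Submission
  imports Defs
begin

section \<open>Homogeneous forms\<close>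

definition monom_at :: "nat \<times> nat \<times> nat \<Rightarrow> 'a::field pt \<Rightarrow> 'a" where
  "monom_at m v = fst v ^ fst m * fst (snd v) ^ fst (snd m) * snd (snd v) ^ snd (snd m)"

lemma form_eval_monom_at: "form_eval d c v = (\<Sum>m\<in>mons d. c m * monom_at m v)"
  unfolding form_eval_def monom_at_def by (simp add: split_beta mult.assoc)

lemma finite_mons: "finite (mons d)"
proof -
  have "mons d \<subseteq> {..d} \<times> {..d} \<times> {..d}" by (auto simp: mons_def)
  then show ?thesis by (rule finite_subset) auto
qed

lemma mons_1: "mons 1 = {(1,0,0), (0,1,0), (0,0,1)}"
  by (auto simp: mons_def)

lemma nat_le_3_cases: "(i::nat) \<le> 3 \<Longrightarrow> i = 0 \<or> i = 1 \<or> i = 2 \<or> i = 3"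
  by auto

lemma mons_2: "mons 2 = {(2,0,0), (0,2,0), (0,0,2), (1,1,0), (1,0,1), (0,1,1)}"
proof
  show "mons 2 \<subseteq> {(2,0,0), (0,2,0), (0,0,2), (1,1,0), (1,0,1), (0,1,1)}"
  proof
    fix m assume "m \<in> mons 2"
    then obtain i j k where m: "m = (i, j, k)" "i + j + k = 2" by (cases m) (auto simp: mons_def)
    then have "i \<le> 3" "j \<le> 3" by auto
    then show "m \<in> {(2,0,0), (0,2,0), (0,0,2), (1,1,0), (1,0,1), (0,1,1)}"
      using m by (elim nat_le_3_cases[elim_format] disjE) auto
  qed
qed (auto simp: mons_def)

lemma mons_3:
  "mons 3 = {(3,0,0), (0,3,0), (0,0,3), (2,1,0), (2,0,1), (1,2,0), (0,2,1), (1,0,2), (0,1,2), (1,1,1)}"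
proof
  show "mons 3 \<subseteq> {(3,0,0), (0,3,0), (0,0,3), (2,1,0), (2,0,1), (1,2,0), (0,2,1), (1,0,2), (0,1,2), (1,1,1)}"
  proof
    fix m assume "m \<in> mons 3"
    then obtain i j k where m: "m = (i, j, k)" "i + j + k = 3" by (cases m) (auto simp: mons_def)
    then have "i \<le> 3" "j \<le> 3" by auto
    then show "m \<in> {(3,0,0), (0,3,0), (0,0,3), (2,1,0), (2,0,1), (1,2,0), (0,2,1), (1,0,2), (0,1,2), (1,1,1)}"
      using m by (elim nat_le_3_cases[elim_format] disjE) auto
  qed
qed (auto simp: mons_def)

definition dot :: "'a::field pt \<Rightarrow> 'a pt \<Rightarrow> 'a" where
  "dot n v = fst n * fst v + fst (snd n) * fst (snd v) + snd (snd n) * snd (snd v)"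

definition linear_coeffs :: "(nat \<times> nat \<times> nat \<Rightarrow> 'a::field) \<Rightarrow> 'a pt" where
  "linear_coeffs l = (l (1,0,0), l (0,1,0), l (0,0,1))"

definition linear_form :: "'a::field pt \<Rightarrow> nat \<times> nat \<times> nat \<Rightarrow> 'a" where
  "linear_form n m = (if m = (1,0,0) then fst n else if m = (0,1,0) then fst (snd n)
     else if m = (0,0,1) then snd (snd n) else 0)"

lemma form_eval_1: "form_eval 1 l v = dot (linear_coeffs l) v"
  unfolding form_eval_monom_at mons_1 by (simp add: monom_at_def dot_def linear_coeffs_def)

lemma linear_coeffs_linear_form [simp]: "linear_coeffs (linear_form n) = n"
  by (simp add: linear_coeffs_def linear_form_def)

lemma nonzero_form_1_iff: "nonzero_form 1 l \<longleftrightarrow> linear_coeffs l \<noteq> (0,0,0)"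
  unfolding nonzero_form_def mons_1 linear_coeffs_def by auto

lemma form_eval_2:
  "form_eval 2 f (x,y,z) = f (2,0,0) * x^2 + f (0,2,0) * y^2 + f (0,0,2) * z^2
     + f (1,1,0) * x * y + f (1,0,1) * x * z + f (0,1,1) * y * z"
  unfolding form_eval_monom_at mons_2 by (simp add: monom_at_def algebra_simps)

lemma form_eval_3:
  "form_eval 3 f (x,y,z) = f (3,0,0) * x^3 + f (0,3,0) * y^3 + f (0,0,3) * z^3
     + f (2,1,0) * x^2 * y + f (2,0,1) * x^2 * z + f (1,2,0) * x * y^2 + f (0,2,1) * y^2 * z
     + f (1,0,2) * x * z^2 + f (0,1,2) * y * z^2 + f (1,1,1) * x * y * z"
  unfolding form_eval_monom_at mons_3 by (simp add: monom_at_def algebra_simps)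

lemma form_eval_scale: "form_eval d c (k * x, k * y, k * z) = k ^ d * form_eval d c (x, y, z)"
  unfolding form_eval_monom_at sum_distrib_left
proof (intro sum.cong refl)
  fix m assume "m \<in> mons d"
  then have "d = fst m + fst (snd m) + snd (snd m)" by (auto simp: mons_def)
  then show "c m * monom_at m (k * x, k * y, k * z) = k ^ d * (c m * monom_at m (x, y, z))"
    by (simp add: monom_at_def power_mult_distrib power_add algebra_simps)
qed

lemma form_eval_eq_0_if_proportional:
  assumes "proportional v w" "form_eval d c v = 0"
  shows "form_eval d c w = 0"
proof -
  obtain k where k: "k \<noteq> 0" "v = (k * fst w, k * fst (snd w), k * snd (snd w))"
    using assms(1) unfolding proportional_def by blast
  then have "k ^ d * form_eval d c w = 0"
    using assms(2) form_eval_scale[of d c k] by (cases w) auto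
  then show ?thesis using k by simp
qed

definition is_form :: "nat \<Rightarrow> ('a::field pt \<Rightarrow> 'a) \<Rightarrow> bool" where
  "is_form d f \<longleftrightarrow> (\<exists>c. \<forall>v. f v = form_eval d c v)"

lemma is_form_form_eval: "is_form d (form_eval d c)"
  unfolding is_form_def by blast

lemma is_form_zero: "is_form d (\<lambda>v. 0)"
  unfolding is_form_def by (rule exI[of _ "\<lambda>_. 0"]) (simp add: form_eval_monom_at)

lemma is_form_const: "is_form 0 (\<lambda>v. k)"
proof -
  have "mons 0 = {(0,0,0)}" by (auto simp: mons_def)
  then show ?thesis unfolding is_form_def
    by (intro exI[of _ "\<lambda>_. k"]) (simp add: form_eval_monom_at monom_at_def)
qed

lemma is_form_dot: "is_form 1 (dot n)"
  unfolding is_form_def form_eval_1 by (rule exI[of _ "linear_form n"]) simp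

lemma is_form_add:
  assumes "is_form d f" "is_form d g"
  shows "is_form d (\<lambda>v. f v + g v)"
proof -
  obtain a b where "\<forall>v. f v = form_eval d a v" "\<forall>v. g v = form_eval d b v"
    using assms unfolding is_form_def by blast
  then show ?thesis unfolding is_form_def
    by (intro exI[of _ "\<lambda>m. a m + b m"]) (simp add: form_eval_monom_at sum.distrib distrib_right)
qed

lemma is_form_cmult:
  assumes "is_form d f"
  shows "is_form d (\<lambda>v. k * f v)"
proof -
  obtain a where "\<forall>v. f v = form_eval d a v"
    using assms unfolding is_form_def by blast
  then show ?thesis unfolding is_form_def
    by (intro exI[of _ "\<lambda>m. k * a m"]) (simp add: form_eval_monom_at sum_distrib_left mult.assoc)
qed

lemma is_form_sum:
  assumes "finite A" "\<And>x. x \<in> A \<Longrightarrow> is_form d (f x)"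
  shows "is_form d (\<lambda>v. \<Sum>x\<in>A. f x v)"
  using assms by (induction A rule: finite_induct) (auto intro: is_form_zero is_form_add)

lemma is_form_mult:
  assumes "is_form a f" "is_form b g"
  shows "is_form (a + b) (\<lambda>v. f v * g v)"
proof -
  obtain c1 c2 where c1: "\<forall>v. f v = form_eval a c1 v" and c2: "\<forall>v. g v = form_eval b c2 v"
    using assms unfolding is_form_def by blast
  define P where "P = mons a \<times> mons b"
  define h where "h = (\<lambda>(m1, m2). (fst m1 + fst m2, fst (snd m1) + fst (snd m2),
                                    snd (snd m1) + snd (snd m2)) :: nat \<times> nat \<times> nat)"
  define cc where "cc = (\<lambda>m. \<Sum>p\<in>{p \<in> P. h p = m}. c1 (fst p) * c2 (snd p))"
  have fin: "finite P" unfolding P_def by (simp add: finite_mons)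
  have into: "h ` P \<subseteq> mons (a + b)" unfolding h_def P_def by (auto simp: mons_def)
  have monom_at_h: "monom_at (h p) v = monom_at (fst p) v * monom_at (snd p) v" for p v
    by (simp add: h_def monom_at_def split_beta power_add algebra_simps)
  have "f v * g v = form_eval (a + b) cc v" for v
  proof -
    have "f v * g v = (\<Sum>p\<in>P. (c1 (fst p) * c2 (snd p)) * monom_at (h p) v)"
      by (simp add: c1 c2 form_eval_monom_at sum_product monom_at_h P_def sum.cartesian_product
          split_beta algebra_simps)
    also have "\<dots> = (\<Sum>m\<in>mons (a + b). \<Sum>p\<in>{p \<in> P. h p = m}. (c1 (fst p) * c2 (snd p)) * monom_at (h p) v)"
      by (rule sum.group[OF fin finite_mons into, symmetric])
    also have "\<dots> = (\<Sum>m\<in>mons (a + b). cc m * monom_at m v)"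
      unfolding cc_def sum_distrib_right by (intro sum.cong refl) auto
    finally show ?thesis by (simp add: form_eval_monom_at)
  qed
  then show ?thesis unfolding is_form_def by blast
qed

lemma is_form_power:
  assumes "is_form 1 g"
  shows "is_form n (\<lambda>v. g v ^ n)"
proof (induction n)
  case 0
  then show ?case using is_form_const[of 1] by simp
next
  case (Suc n)
  from is_form_mult[OF assms Suc] show ?case by simp
qed

lemma is_form_compose:
  assumes "is_form d f" "is_form 1 g1" "is_form 1 g2" "is_form 1 g3"
  shows "is_form d (\<lambda>v. f (g1 v, g2 v, g3 v))"
proof -
  obtain c where c: "\<forall>v. f v = form_eval d c v" using assms(1) unfolding is_form_def by blast
  define mon_g where "mon_g = (\<lambda>m v. g1 v ^ fst m * g2 v ^ fst (snd m) * g3 v ^ snd (snd m))"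
  have "is_form d (\<lambda>v. c m * mon_g m v)" if "m \<in> mons d" for m
  proof -
    have "is_form (fst m + fst (snd m) + snd (snd m)) (mon_g m)"
      unfolding mon_g_def by (intro is_form_mult is_form_power assms)
    moreover have "fst m + fst (snd m) + snd (snd m) = d" using that by (auto simp: mons_def)
    ultimately show ?thesis by (intro is_form_cmult) simp
  qed
  then have "is_form d (\<lambda>v. \<Sum>m\<in>mons d. c m * mon_g m v)"
    by (intro is_form_sum finite_mons)
  moreover have "f (g1 v, g2 v, g3 v) = (\<Sum>m\<in>mons d. c m * mon_g m v)" for v
    by (simp add: c form_eval_monom_at monom_at_def mon_g_def)
  ultimately show ?thesis by simp
qed

lemma coeffs_eq_0_if_many_roots:
  fixes a :: "nat \<Rightarrow> 'a::field"
  assumes "finite R" "card R > n" "\<forall>t\<in>R. (\<Sum>i\<le>n. a i * t ^ i) = 0" "i \<le> n"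
  shows "a i = 0"
proof -
  define p where "p = (\<Sum>j\<le>n. monom (a j) j)"
  have poly_p: "poly p t = (\<Sum>j\<le>n. a j * t ^ j)" for t
    by (simp add: p_def poly_sum poly_monom)
  have "p = 0"
  proof (rule ccontr)
    assume "p \<noteq> 0"
    have "card R \<le> card {x. poly p x = 0}"
      by (intro card_mono poly_roots_finite[OF \<open>p \<noteq> 0\<close>]) (use assms poly_p in auto)
    also have "\<dots> \<le> degree p" by (rule card_poly_roots_bound) fact
    also have "degree p \<le> n" unfolding p_def
      by (intro degree_sum_le) (auto intro: order.trans[OF degree_monom_le])
    finally show False using assms(2) by simp
  qed
  moreover have "coeff p i = a i" using assms(4) by (simp add: p_def coeff_sum coeff_monom)
  ultimately show ?thesis by simp
qed

lemma algebraically_closed_infinite: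
  assumes "algebraically_closed TYPE('a::field)"
  shows "infinite (UNIV :: 'a set)"
proof
  assume fin: "finite (UNIV :: 'a set)"
  define q :: "'a poly" where "q = (\<Prod>a\<in>UNIV. [:-a, 1:])"
  have "degree q = card (UNIV :: 'a set)"
    unfolding q_def by (subst degree_prod_eq_sum_degree) auto
  moreover have "card (UNIV :: 'a set) > 0" using fin by (simp add: card_gt_0_iff)
  ultimately have "degree (1 + q) > 0" by (subst degree_add_eq_right) auto
  then obtain x where "poly (1 + q) x = 0"
    using assms unfolding algebraically_closed_def by blast
  moreover have "poly q x = 0"
    unfolding q_def poly_prod using fin by (intro prod_zero bexI[of _ x]) auto
  ultimately show False by simp
qed

lemma form_eval_expand:
  "form_eval d c (x, y, z) = (\<Sum>k\<le>d. (\<Sum>i\<le>d - k. c (i, d - k - i, k) * x ^ i * y ^ (d - k - i)) * z ^ k)"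
proof -
  define I where "I = (SIGMA k:{..d}. {..d - k})"
  define e where "e = (\<lambda>(k::nat, i::nat). (i, d - k - i, k))"
  have mons_d: "mons d = e ` I"
  proof
    show "mons d \<subseteq> e ` I"
    proof
      fix m assume "m \<in> mons d"
      then obtain i j k where "m = (i, j, k)" "i + j + k = d" by (cases m) (auto simp: mons_def)
      then show "m \<in> e ` I" by (intro image_eqI[of _ _ "(k, i)"]) (auto simp: e_def I_def)
    qed
  qed (auto simp: e_def I_def mons_def)
  have "inj_on e I" by (auto simp: inj_on_def e_def I_def)
  then have "form_eval d c (x, y, z) = (\<Sum>p\<in>I. c (e p) * monom_at (e p) (x, y, z))"
    unfolding form_eval_monom_at mons_d by (simp add: sum.reindex)
  also have "\<dots> = (\<Sum>(k, i)\<in>I. c (i, d - k - i, k) * x ^ i * y ^ (d - k - i) * z ^ k)"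
    by (intro sum.cong refl) (auto simp: e_def monom_at_def mult.assoc)
  also have "\<dots> = (\<Sum>k\<le>d. \<Sum>i\<le>d - k. c (i, d - k - i, k) * x ^ i * y ^ (d - k - i) * z ^ k)"
    unfolding I_def by (rule sum.Sigma[symmetric]) auto
  finally show ?thesis by (simp add: sum_distrib_right)
qed

lemma coeff_eq_0_if_form_eval_eq_0:
  fixes c :: "nat \<times> nat \<times> nat \<Rightarrow> 'a::field"
  assumes inf: "infinite (UNIV :: 'a set)"
    and zero: "\<forall>v. form_eval d c v = 0" and m: "m \<in> mons d"
  shows "c m = 0"
proof -
  have roots: "a i = 0" if "\<And>t. (\<Sum>i\<le>n. a i * t ^ i) = 0" "i \<le> n"
    for n and a :: "nat \<Rightarrow> 'a" and i
  proof -
    obtain R :: "'a set" where "finite R" "card R = Suc n"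
      using infinite_arbitrarily_large[OF inf] by blast
    then show ?thesis using coeffs_eq_0_if_many_roots[of R n a i] that by auto
  qed
  obtain i j k where m': "m = (i, j, k)" "i + j + k = d" using m by (cases m) (auto simp: mons_def)
  have column: "(\<Sum>i\<le>d - k. c (i, d - k - i, k) * x ^ i * y ^ (d - k - i)) = 0" for x y
    using roots[where n=d and a="\<lambda>k. \<Sum>i\<le>d - k. c (i, d - k - i, k) * x ^ i * y ^ (d - k - i)" and i=k] zero m'
    by (auto simp: form_eval_expand)
  have "c (i, d - k - i, k) = 0"
    using roots[where n="d - k" and a="\<lambda>i. c (i, d - k - i, k)" and i=i] column[of _ 1] m' by (auto simp: mult.commute)
  moreover have "d - k - i = j" using m'(2) by simp
  ultimately show ?thesis using m'(1) by simp
qed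

lemma form_eval_eq_0_if_not_nonzero_form: "\<not> nonzero_form d c \<Longrightarrow> form_eval d c v = 0"
  unfolding nonzero_form_def form_eval_monom_at by auto

lemma form_eval_eq_z_times:
  assumes "\<forall>m\<in>mons (Suc d). snd (snd m) = 0 \<longrightarrow> g m = 0"
  shows "form_eval (Suc d) g v = snd (snd v) * form_eval d (\<lambda>(i, j, k). g (i, j, Suc k)) v"
proof -
  define up where "up = (\<lambda>(i, j, k). (i, j, Suc k) :: nat \<times> nat \<times> nat)"
  have sub: "up ` mons d \<subseteq> mons (Suc d)" by (auto simp: up_def mons_def)
  have rest: "\<forall>m\<in>mons (Suc d) - up ` mons d. g m * monom_at m v = 0"
  proof
    fix m assume m: "m \<in> mons (Suc d) - up ` mons d"
    obtain i j k where ijk: "m = (i, j, k)" by (cases m)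
    have "k = 0"
    proof (rule ccontr)
      assume "k \<noteq> 0"
      then have "m = up (i, j, k - 1)" "(i, j, k - 1) \<in> mons d"
        using m ijk by (auto simp: up_def mons_def)
      then show False using m by blast
    qed
    then show "g m * monom_at m v = 0" using assms m ijk by auto
  qed
  have "inj_on up (mons d)" by (auto simp: inj_on_def up_def)
  then have "form_eval (Suc d) g v = (\<Sum>m\<in>mons d. g (up m) * monom_at (up m) v)"
    unfolding form_eval_monom_at
    by (simp add: sum.mono_neutral_right[OF finite_mons sub rest] sum.reindex)
  also have "\<dots> = snd (snd v) * form_eval d (\<lambda>(i, j, k). g (i, j, Suc k)) v"
    unfolding form_eval_monom_at sum_distrib_left
    by (intro sum.cong refl) (auto simp: up_def monom_at_def algebra_simps)
  finally show ?thesis .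
qed

lemma abs_irreducible_cubic_no_factorization:
  fixes c :: "nat \<times> nat \<times> nat \<Rightarrow> 'a::field"
  assumes inf: "infinite (UNIV :: 'a set)" and irr: "abs_irreducible_cubic c"
    and "is_form 1 L" "is_form 2 Q" "\<forall>v. form_eval 3 c v = L v * Q v"
  shows False
proof -
  obtain l q where l: "\<forall>v. L v = form_eval 1 l v" and q: "\<forall>v. Q v = form_eval 2 q v"
    using assms(3,4) unfolding is_form_def by blast
  have "\<not> (\<forall>v. form_eval 3 c v = 0)"
    using irr coeff_eq_0_if_form_eval_eq_0[OF inf]
    unfolding abs_irreducible_cubic_def nonzero_form_def by blast
  then have "nonzero_form 1 l" "nonzero_form 2 q"
    using assms(5) l q form_eval_eq_0_if_not_nonzero_form by (metis mult_zero_left mult_zero_right)+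
  then show False using irr assms(5) l q unfolding abs_irreducible_cubic_def by auto
qed

section \<open>Lines, conics and projective changes of coordinates\<close>

definition on_plane_curve :: "nat \<Rightarrow> 'a::field pt set \<Rightarrow> bool" where
  "on_plane_curve d S \<longleftrightarrow> (\<exists>f. nonzero_form d f \<and> (\<forall>v\<in>S. form_eval d f v = 0))"

definition no_three_collinear :: "'a::field pt set \<Rightarrow> bool" where
  "no_three_collinear X \<longleftrightarrow> (\<forall>S\<subseteq>X. card S = 3 \<longrightarrow> \<not> on_plane_curve 1 S)"

lemma general_position_iff:
  "general_position B \<longleftrightarrow> no_three_collinear B \<and> (\<forall>S\<subseteq>B. card S = 6 \<longrightarrow> \<not> on_plane_curve 2 S)"
  unfolding general_position_def no_three_collinear_def on_plane_curve_def by (rule refl)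

lemma on_plane_curve_subset: "S \<subseteq> T \<Longrightarrow> on_plane_curve d T \<Longrightarrow> on_plane_curve d S"
  unfolding on_plane_curve_def by blast

lemma on_plane_curve_1_iff: "on_plane_curve 1 S \<longleftrightarrow> (\<exists>n. n \<noteq> (0,0,0) \<and> (\<forall>v\<in>S. dot n v = 0))"
proof
  assume "on_plane_curve 1 S"
  then obtain l where "nonzero_form 1 l" "\<forall>v\<in>S. form_eval 1 l v = 0"
    unfolding on_plane_curve_def by blast
  then show "\<exists>n. n \<noteq> (0,0,0) \<and> (\<forall>v\<in>S. dot n v = 0)"
    unfolding form_eval_1 nonzero_form_1_iff by blast
next
  assume "\<exists>n. n \<noteq> (0,0,0) \<and> (\<forall>v\<in>S. dot n v = 0)"
  then obtain n where "n \<noteq> (0,0,0)" "\<forall>v\<in>S. dot n v = 0" by blast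
  then show "on_plane_curve 1 S"
    unfolding on_plane_curve_def form_eval_1 nonzero_form_1_iff
    by (intro exI[of _ "linear_form n"]) simp
qed

lemma no_three_collinearD:
  assumes "no_three_collinear X" "x \<in> X" "y \<in> X" "z \<in> X" "x \<noteq> y" "x \<noteq> z" "y \<noteq> z"
    and "n \<noteq> (0,0,0)" "dot n x = 0" "dot n y = 0" "dot n z = 0"
  shows False
proof -
  have "{x, y, z} \<subseteq> X" "card {x, y, z} = 3" using assms(2-7) by simp_all
  then have "\<not> on_plane_curve 1 {x, y, z}"
    using assms(1) unfolding no_three_collinear_def by blast
  moreover have "on_plane_curve 1 {x, y, z}" unfolding on_plane_curve_1_iff using assms(8-) by blast
  ultimately show False by contradiction
qed

definition cross :: "'a::field pt \<Rightarrow> 'a pt \<Rightarrow> 'a pt" where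
  "cross p q = (fst (snd p) * snd (snd q) - snd (snd p) * fst (snd q),
                snd (snd p) * fst q - fst p * snd (snd q),
                fst p * fst (snd q) - fst (snd p) * fst q)"

definition det3 :: "'a::field pt \<Rightarrow> 'a pt \<Rightarrow> 'a pt \<Rightarrow> 'a" where
  "det3 p q r = dot (cross p q) r"

lemma det3_rotate: "det3 p q r = dot (cross q r) p" "det3 p q r = dot (cross r p) q"
  by (simp_all add: det3_def dot_def cross_def algebra_simps)

lemma det3_repeated [simp]: "det3 p p r = 0" "det3 p q p = 0" "det3 p q q = 0"
  by (simp_all add: det3_def dot_def cross_def algebra_simps)

lemma proportional_if_cross_eq_0:
  assumes "p \<noteq> (0,0,0)" "q \<noteq> (0,0,0)" "cross p q = (0,0,0)"
  shows "proportional q p"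
proof -
  obtain a b c where p: "p = (a, b, c)" by (cases p)
  obtain x y z where q: "q = (x, y, z)" by (cases q)
  have e: "b * z = c * y" "c * x = a * z" "a * y = b * x"
    using assms(3) unfolding p q cross_def by auto
  have "\<exists>k. k \<noteq> 0 \<and> q = (k * a, k * b, k * c)"
  proof -
    consider "a \<noteq> 0" | "b \<noteq> 0" | "c \<noteq> 0" using assms(1) p by auto
    then show ?thesis
    proof cases
      case 1
      then show ?thesis using e assms(2) q by (intro exI[of _ "x / a"]) (auto simp: field_simps)
    next
      case 2
      then show ?thesis using e assms(2) q by (intro exI[of _ "y / b"]) (auto simp: field_simps)
    next
      case 3
      then show ?thesis using e assms(2) q by (intro exI[of _ "z / c"]) (auto simp: field_simps)
    qed
  qed
  then show ?thesis unfolding proportional_def p by simp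
qed

lemma det3_eq_0_if_common_line:
  assumes "n \<noteq> (0,0,0)" "dot n p = 0" "dot n q = 0" "dot n r = 0"
  shows "det3 p q r = 0"
proof -
  obtain n1 n2 n3 where n: "n = (n1, n2, n3)" by (cases n)
  have "det3 p q r * n1 = dot n p * fst (cross q r) + dot n q * fst (cross r p) + dot n r * fst (cross p q)"
    and "det3 p q r * n2 = dot n p * fst (snd (cross q r)) + dot n q * fst (snd (cross r p))
      + dot n r * fst (snd (cross p q))"
    and "det3 p q r * n3 = dot n p * snd (snd (cross q r)) + dot n q * snd (snd (cross r p))
      + dot n r * snd (snd (cross p q))"
    unfolding n by (simp_all add: det3_def dot_def cross_def algebra_simps)
  then show ?thesis using assms n by (cases "det3 p q r = 0") auto
qed

lemma cross_ne_0:
  assumes "p \<noteq> (0,0,0)" "q \<noteq> (0,0,0)" "\<not> proportional q p"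
  shows "cross p q \<noteq> (0,0,0)"
  using assms proportional_if_cross_eq_0 by blast

lemma collinear_if_det3_eq_0:
  assumes "p \<noteq> (0,0,0)" "q \<noteq> (0,0,0)" "\<not> proportional q p" "det3 p q r = 0"
  shows "on_plane_curve 1 {p, q, r}"
proof -
  have "dot (cross p q) p = 0" "dot (cross p q) q = 0" "dot (cross p q) r = 0"
    using det3_repeated(2,3) assms(4) unfolding det3_def by blast+
  then show ?thesis unfolding on_plane_curve_1_iff using cross_ne_0[OF assms(1-3)] by blast
qed

lemma det3_ne_0_if_no_three_collinear:
  assumes "no_three_collinear X" "distinct_proj_points X" "p \<in> X" "q \<in> X" "r \<in> X"
    "p \<noteq> q" "p \<noteq> r" "q \<noteq> r"
  shows "det3 p q r \<noteq> 0"
proof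
  assume "det3 p q r = 0"
  moreover have "p \<noteq> (0,0,0)" "q \<noteq> (0,0,0)" "\<not> proportional q p"
    using assms(2-6) unfolding distinct_proj_points_def by blast+
  ultimately have "on_plane_curve 1 {p, q, r}" by (rule collinear_if_det3_eq_0[rotated -1])
  moreover have "{p, q, r} \<subseteq> X" "card {p, q, r} = 3" using assms(3-8) by simp_all
  ultimately show False using assms(1) unfolding no_three_collinear_def by blast
qed

lemma exists_det3_ne_0:
  assumes "p \<noteq> (0,0,0)" "q \<noteq> (0,0,0)" "\<not> proportional q p"
  obtains r where "det3 p q r \<noteq> 0"
proof -
  have "det3 p q (1,0,0) = fst (cross p q)" "det3 p q (0,1,0) = fst (snd (cross p q))"
    "det3 p q (0,0,1) = snd (snd (cross p q))" by (simp_all add: det3_def dot_def)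
  then show ?thesis using cross_ne_0[OF assms] that by (cases "cross p q") auto
qed

definition linear_pt_map :: "('a::field pt \<Rightarrow> 'a pt) \<Rightarrow> bool" where
  "linear_pt_map \<phi> \<longleftrightarrow> is_form 1 (\<lambda>v. fst (\<phi> v)) \<and> is_form 1 (\<lambda>v. fst (snd (\<phi> v)))
     \<and> is_form 1 (\<lambda>v. snd (snd (\<phi> v)))"

definition projectivity :: "('a::field pt \<Rightarrow> 'a pt) \<Rightarrow> ('a pt \<Rightarrow> 'a pt) \<Rightarrow> bool" where
  "projectivity \<phi> \<psi> \<longleftrightarrow> linear_pt_map \<phi> \<and> linear_pt_map \<psi> \<and> (\<forall>v. \<psi> (\<phi> v) = v) \<and> (\<forall>w. \<phi> (\<psi> w) = w)"

lemma projectivity_sym: "projectivity \<phi> \<psi> \<Longrightarrow> projectivity \<psi> \<phi>"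
  unfolding projectivity_def by blast

lemma projectivityD:
  assumes "projectivity \<phi> \<psi>"
  shows "linear_pt_map \<phi>" "\<And>v. \<psi> (\<phi> v) = v" "\<And>w. \<phi> (\<psi> w) = w" "surj \<phi>"
  using assms unfolding projectivity_def by (metis surjI)+

lemma is_form_comp_linear:
  assumes "is_form d f" "linear_pt_map \<phi>"
  shows "is_form d (\<lambda>v. f (\<phi> v))"
  using is_form_compose[OF assms(1), of "\<lambda>v. fst (\<phi> v)" "\<lambda>v. fst (snd (\<phi> v))" "\<lambda>v. snd (snd (\<phi> v))"]
    assms(2)
  unfolding linear_pt_map_def by simp

lemma form_eval_comp_linear:
  assumes "linear_pt_map \<phi>"
  obtains g where "\<And>v. form_eval d g v = form_eval d f (\<phi> v)"
  using is_form_comp_linear[OF is_form_form_eval assms] unfolding is_form_def by metis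

lemma linear_pt_map_scale:
  assumes "linear_pt_map \<phi>"
  shows "\<phi> (k * x, k * y, k * z) =
    (k * fst (\<phi> (x, y, z)), k * fst (snd (\<phi> (x, y, z))), k * snd (snd (\<phi> (x, y, z))))"
proof -
  have scale: "g (k * x, k * y, k * z) = k * g (x, y, z)" if "is_form 1 g" for g :: "'a pt \<Rightarrow> 'a"
    using that form_eval_scale[of 1 _ k x y z] unfolding is_form_def by auto
  show ?thesis
    using scale[of "\<lambda>v. fst (\<phi> v)"] scale[of "\<lambda>v. fst (snd (\<phi> v))"] scale[of "\<lambda>v. snd (snd (\<phi> v))"]
      assms
    unfolding linear_pt_map_def by (simp add: prod_eq_iff)
qed

lemma proportional_linear_pt_map:
  assumes "linear_pt_map \<phi>" "proportional v w"
  shows "proportional (\<phi> v) (\<phi> w)"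
  using assms(2) linear_pt_map_scale[OF assms(1)] unfolding proportional_def by (cases w) auto

lemma projectivity_proportional_iff:
  assumes "projectivity \<phi> \<psi>"
  shows "proportional (\<phi> v) (\<phi> w) \<longleftrightarrow> proportional v w"
proof
  assume "proportional (\<phi> v) (\<phi> w)"
  then have "proportional (\<psi> (\<phi> v)) (\<psi> (\<phi> w))"
    by (rule proportional_linear_pt_map[OF projectivityD(1)[OF projectivity_sym[OF assms]]])
  then show "proportional v w" by (simp only: projectivityD(2)[OF assms])
qed (rule proportional_linear_pt_map[OF projectivityD(1)[OF assms]])

lemma projectivity_eq_0_iff:
  assumes "projectivity \<phi> \<psi>"
  shows "\<phi> v = (0,0,0) \<longleftrightarrow> v = (0,0,0)"
proof -
  have zero: "\<alpha> (0,0,0) = (0,0,0)" if "linear_pt_map \<alpha>" for \<alpha> :: "'a pt \<Rightarrow> 'a pt"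
    using linear_pt_map_scale[OF that, of 0 0 0 0] by simp
  show ?thesis
    using zero[OF projectivityD(1)[OF assms]] zero[OF projectivityD(1)[OF projectivity_sym[OF assms]]]
      projectivityD(2)[OF assms] by metis
qed

lemma projectivity_inj: "projectivity \<phi> \<psi> \<Longrightarrow> inj \<phi>"
  by (metis injI projectivityD(2))

lemma distinct_proj_points_projectivity:
  assumes "projectivity \<phi> \<psi>" "distinct_proj_points X"
  shows "distinct_proj_points (\<phi> ` X)"
  using assms projectivity_eq_0_iff[OF assms(1)] projectivity_proportional_iff[OF assms(1)]
  unfolding distinct_proj_points_def by auto

lemma nonzero_form_comp_linear:
  fixes f :: "nat \<times> nat \<times> nat \<Rightarrow> 'a::field"
  assumes inf: "infinite (UNIV :: 'a set)"
    and "linear_pt_map \<phi>" "surj \<phi>" "nonzero_form d f"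
  obtains g where "nonzero_form d g" "\<And>v. form_eval d g v = form_eval d f (\<phi> v)"
proof -
  obtain g where g: "\<And>v. form_eval d g v = form_eval d f (\<phi> v)"
    using form_eval_comp_linear[OF assms(2)] by blast
  have "nonzero_form d g"
  proof (rule ccontr)
    assume "\<not> nonzero_form d g"
    then have "\<forall>w. form_eval d f w = 0"
      using g form_eval_eq_0_if_not_nonzero_form assms(3) by (metis surjD)
    then show False
      using assms(4) coeff_eq_0_if_form_eval_eq_0[OF inf] unfolding nonzero_form_def by blast
  qed
  with g show ?thesis using that by blast
qed

lemma on_plane_curve_projectivity_iff:
  fixes \<phi> \<psi> :: "'a::field pt \<Rightarrow> 'a pt"
  assumes "infinite (UNIV :: 'a set)" "projectivity \<phi> \<psi>"
  shows "on_plane_curve d (\<phi> ` S) \<longleftrightarrow> on_plane_curve d S"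
proof -
  have pullback: "on_plane_curve d T" if proj: "projectivity \<alpha> \<beta>" and on: "on_plane_curve d (\<alpha> ` T)"
    for \<alpha> \<beta> :: "'a pt \<Rightarrow> 'a pt" and T
  proof -
    obtain f where f: "nonzero_form d f" "\<forall>v\<in>\<alpha> ` T. form_eval d f v = 0"
      using on unfolding on_plane_curve_def by blast
    obtain g where "nonzero_form d g" "\<And>v. form_eval d g v = form_eval d f (\<alpha> v)"
      using nonzero_form_comp_linear[OF assms(1) projectivityD(1,4)[OF proj] f(1)] by blast
    then show ?thesis using f(2) unfolding on_plane_curve_def by auto
  qed
  have "\<psi> ` \<phi> ` S = S" by (simp add: image_comp projectivityD(2)[OF assms(2)])
  then show ?thesis
    using pullback[of \<phi> \<psi> S] pullback[of \<psi> \<phi> "\<phi> ` S"] assms(2) projectivity_sym by metis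
qed

lemma no_three_collinear_projectivity:
  fixes \<phi> \<psi> :: "'a::field pt \<Rightarrow> 'a pt"
  assumes "infinite (UNIV :: 'a set)" "projectivity \<phi> \<psi>"
    "no_three_collinear X"
  shows "no_three_collinear (\<phi> ` X)"
  unfolding no_three_collinear_def
proof (intro allI impI notI)
  fix S' assume S': "S' \<subseteq> \<phi> ` X" "card S' = 3" "on_plane_curve 1 S'"
  then obtain S where S: "S \<subseteq> X" "S' = \<phi> ` S" by (auto simp: subset_image_iff)
  have "card S = 3"
    using S' S card_image[OF inj_on_subset[OF projectivity_inj[OF assms(2)]]] by auto
  moreover have "on_plane_curve 1 S"
    using S' S on_plane_curve_projectivity_iff[OF assms(1,2)] by simp
  ultimately show False using assms(3) S unfolding no_three_collinear_def by blast
qed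

lemma abs_irreducible_cubic_projectivity:
  fixes \<phi> \<psi> :: "'a::field pt \<Rightarrow> 'a pt"
  assumes inf: "infinite (UNIV :: 'a set)" and proj: "projectivity \<phi> \<psi>"
    and irr: "abs_irreducible_cubic c"
  obtains f where "abs_irreducible_cubic f" "\<And>v. form_eval 3 c v = form_eval 3 f (\<phi> v)"
proof -
  note \<psi> = projectivityD[OF projectivity_sym[OF proj]]
  obtain f where f: "nonzero_form 3 f" "\<And>w. form_eval 3 f w = form_eval 3 c (\<psi> w)"
    using nonzero_form_comp_linear[OF inf \<psi>(1,4)] irr unfolding abs_irreducible_cubic_def by metis
  have c_f: "form_eval 3 c v = form_eval 3 f (\<phi> v)" for v
    by (simp add: f(2) projectivityD(2)[OF proj])
  have "\<not> (\<exists>l q. nonzero_form 1 l \<and> nonzero_form 2 q \<and>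
            (\<forall>w. form_eval 3 f w = form_eval 1 l w * form_eval 2 q w))"
  proof (intro notI, elim exE conjE)
    fix l q assume fac: "\<forall>w. form_eval 3 f w = form_eval 1 l w * form_eval 2 q w"
    have "form_eval 3 c v = form_eval 1 l (\<phi> v) * form_eval 2 q (\<phi> v)" for v
      by (simp only: c_f fac)
    then show False
      using abs_irreducible_cubic_no_factorization[OF inf irr]
        is_form_comp_linear[OF is_form_form_eval projectivityD(1)[OF proj]] by blast
  qed
  then show ?thesis using that f(1) c_f unfolding abs_irreducible_cubic_def by blast
qed

definition frame_coords :: "'a::field pt \<Rightarrow> 'a pt \<Rightarrow> 'a pt \<Rightarrow> 'a pt \<Rightarrow> 'a pt" where
  "frame_coords p q r v = (det3 v q r / det3 p q r, det3 p v r / det3 p q r, det3 p q v / det3 p q r)"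

definition frame_point :: "'a::field pt \<Rightarrow> 'a pt \<Rightarrow> 'a pt \<Rightarrow> 'a pt \<Rightarrow> 'a pt" where
  "frame_point p q r w =
    (dot (fst p, fst q, fst r) w, dot (fst (snd p), fst (snd q), fst (snd r)) w,
     dot (snd (snd p), snd (snd q), snd (snd r)) w)"

lemma frame_coords_frame [simp]:
  assumes "det3 p q r \<noteq> 0"
  shows "frame_coords p q r p = (1,0,0)" "frame_coords p q r q = (0,1,0)" "frame_coords p q r r = (0,0,1)"
  using assms by (simp_all add: frame_coords_def)

lemma frame_point_frame_coords:
  assumes "det3 p q r \<noteq> 0"
  shows "frame_point p q r (frame_coords p q r v) = v"
proof -
  obtain p1 p2 p3 where p: "p = (p1, p2, p3)" by (cases p)
  obtain q1 q2 q3 where q: "q = (q1, q2, q3)" by (cases q)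
  obtain r1 r2 r3 where r: "r = (r1, r2, r3)" by (cases r)
  obtain v1 v2 v3 where v: "v = (v1, v2, v3)" by (cases v)
  define D where "D = det3 p q r"
  \<comment> \<open>Cramer's rule\<close>
  have "det3 v q r * p1 + det3 p v r * q1 + det3 p q v * r1 = D * v1"
    and "det3 v q r * p2 + det3 p v r * q2 + det3 p q v * r2 = D * v2"
    and "det3 v q r * p3 + det3 p v r * q3 + det3 p q v * r3 = D * v3"
    unfolding D_def p q r v by (simp_all add: det3_def dot_def cross_def algebra_simps)
  then show ?thesis using assms
    unfolding frame_point_def frame_coords_def D_def[symmetric] unfolding p q r v
    by (simp add: dot_def field_simps)
qed

lemma frame_coords_frame_point:
  assumes "det3 p q r \<noteq> 0"
  shows "frame_coords p q r (frame_point p q r w) = w"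
proof -
  obtain s t u where w: "w = (s, t, u)" by (cases w)
  have "det3 (frame_point p q r w) q r = s * det3 p q r"
    and "det3 p (frame_point p q r w) r = t * det3 p q r"
    and "det3 p q (frame_point p q r w) = u * det3 p q r"
    unfolding w by (simp_all add: frame_point_def det3_def dot_def cross_def algebra_simps)
  then show ?thesis using assms unfolding frame_coords_def w by simp
qed

lemma projectivity_frame_coords:
  assumes "det3 p q r \<noteq> 0"
  shows "projectivity (frame_coords p q r) (frame_point p q r)"
proof -
  have "is_form 1 (\<lambda>v. dot n v / k)" for n and k :: 'a
    using is_form_cmult[OF is_form_dot, of "1 / k" n] by simp
  then have "linear_pt_map (frame_coords p q r)"
    unfolding linear_pt_map_def frame_coords_def det3_rotate(1)[of _ q r] det3_rotate(2)[of p _ r]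
    by (simp add: det3_def)
  moreover have "linear_pt_map (frame_point p q r)"
    unfolding linear_pt_map_def frame_point_def fst_conv snd_conv by (intro conjI is_form_dot)
  ultimately show ?thesis
    using assms frame_point_frame_coords frame_coords_frame_point unfolding projectivity_def by blast
qed

section \<open>Intersections of an absolutely irreducible cubic with lines and conics\<close>

lemma cubic_points_in_frame_coords:
  fixes c :: "nat \<times> nat \<times> nat \<Rightarrow> 'a::field"
  assumes inf: "infinite (UNIV :: 'a set)" and irr: "abs_irreducible_cubic c"
    and X: "X \<subseteq> curve_points c" "distinct_proj_points X" and det: "det3 p q r \<noteq> 0"
  obtains f where "abs_irreducible_cubic f" "frame_coords p q r ` X \<subseteq> curve_points f"
    "distinct_proj_points (frame_coords p q r ` X)" "card (frame_coords p q r ` X) = card X"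
proof -
  note proj = projectivity_frame_coords[OF det]
  obtain f where f: "abs_irreducible_cubic f" "\<And>v. form_eval 3 c v = form_eval 3 f (frame_coords p q r v)"
    using abs_irreducible_cubic_projectivity[OF inf proj irr] by blast
  have "frame_coords p q r ` X \<subseteq> curve_points f"
  proof
    fix w assume "w \<in> frame_coords p q r ` X"
    then obtain v where v: "v \<in> X" "w = frame_coords p q r v" by blast
    then have "v \<noteq> (0,0,0)" "form_eval 3 c v = 0" using X(1) unfolding curve_points_def by blast+
    then show "w \<in> curve_points f"
      unfolding curve_points_def using f(2)[of v] projectivity_eq_0_iff[OF proj, of v] v(2) by simp
  qed
  moreover have "card (frame_coords p q r ` X) = card X"
    by (rule card_image[OF inj_on_subset[OF projectivity_inj[OF proj]]]) simp
  ultimately show ?thesis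
    using that f(1) distinct_proj_points_projectivity[OF proj X(2)] by blast
qed

lemma cubic_eq_z_times_if_zeros_on_z0:
  fixes f :: "nat \<times> nat \<times> nat \<Rightarrow> 'a::field"
  assumes "f (3,0,0) = 0" "finite R" "card R \<ge> 3" "\<forall>t\<in>R. form_eval 3 f (t, 1, 0) = 0"
  shows "form_eval 3 f w = snd (snd w) * form_eval 2 (\<lambda>(i, j, k). f (i, j, Suc k)) w"
proof -
  define a where "a = (\<lambda>i::nat. f (i, 3 - i, 0))"
  have "(\<Sum>i\<le>2. a i * t ^ i) = form_eval 3 f (t, 1, 0)" for t
    using assms(1) by (simp add: a_def form_eval_3 numeral_2_eq_2 atMost_Suc algebra_simps)
  then have "a i = 0" if "i \<le> 2" for i
    using coeffs_eq_0_if_many_roots[of R 2 a i] assms(2-4) that by simp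
  from this[of 0] this[of 1] this[of 2] have "f (0,3,0) = 0" "f (1,2,0) = 0" "f (2,1,0) = 0"
    by (simp_all add: a_def)
  then have "\<forall>m\<in>mons 3. snd (snd m) = 0 \<longrightarrow> f m = 0"
    using assms(1) by (simp add: mons_3)
  moreover have "(3::nat) = Suc 2" by simp
  ultimately show ?thesis using form_eval_eq_z_times[of 2 f w] by metis
qed

lemma obtain_line_z0_coords:
  assumes Y: "distinct_proj_points Y" "(1,0,0) \<in> Y" "\<forall>w\<in>Y. snd (snd w) = 0"
    and w: "w \<in> Y" "w \<noteq> (1,0,0)"
  obtains x y where "w = (x, y, 0)" "y \<noteq> 0"
proof -
  obtain x y z where xyz: "w = (x, y, z)" by (cases w)
  then have z: "z = 0" using Y(3) w(1) by auto
  have "y \<noteq> 0"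
  proof
    assume "y = 0"
    then have "x \<noteq> 0" using Y(1) w(1) xyz z unfolding distinct_proj_points_def by auto
    then have "proportional w (1,0,0)"
      unfolding proportional_def xyz z \<open>y = 0\<close> by (intro exI[of _ x]) simp
    then show False using Y(1,2) w unfolding distinct_proj_points_def by blast
  qed
  then show ?thesis using that xyz z by blast
qed

lemma inj_on_slope_line_z0:
  assumes Y: "distinct_proj_points Y" "(1,0,0) \<in> Y" "\<forall>w\<in>Y. snd (snd w) = 0"
  shows "inj_on (\<lambda>w. fst w / fst (snd w)) (Y - {(1,0,0)})"
proof (rule inj_onI)
  fix w w' assume ww': "w \<in> Y - {(1,0,0)}" "w' \<in> Y - {(1,0,0)}"
    "fst w / fst (snd w) = fst w' / fst (snd w')"
  obtain x y where xy: "w = (x, y, 0)" "y \<noteq> 0" using obtain_line_z0_coords[OF Y] ww'(1) by blast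
  obtain x' y' where xy': "w' = (x', y', 0)" "y' \<noteq> 0" using obtain_line_z0_coords[OF Y] ww'(2) by blast
  have "x * y' = x' * y" using ww'(3) xy xy' by (simp add: frac_eq_eq)
  define k where "k = y / y'"
  have "k \<noteq> 0" using xy(2) xy'(2) by (simp add: k_def)
  moreover have "w = (k * x', k * y', k * 0)"
    using \<open>x * y' = x' * y\<close> xy xy' by (simp add: k_def field_simps)
  ultimately have "proportional w w'" unfolding proportional_def xy' fst_conv snd_conv by blast
  then show "w = w'" using Y(1) ww'(1,2) unfolding distinct_proj_points_def by blast
qed

lemma card_le_3_if_on_line_z0:
  fixes f :: "nat \<times> nat \<times> nat \<Rightarrow> 'a::field"
  assumes inf: "infinite (UNIV :: 'a set)" and irr: "abs_irreducible_cubic f"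
    and Y: "Y \<subseteq> curve_points f" "distinct_proj_points Y" "(1,0,0) \<in> Y" "\<forall>w\<in>Y. snd (snd w) = 0"
  shows "card Y \<le> 3"
proof (rule ccontr)
  assume "\<not> card Y \<le> 3"
  then have "finite Y" "card Y \<ge> 4" by (auto intro: card_ge_0_finite)
  define Z where "Z = Y - {(1,0,0)}"
  define slope where "slope = (\<lambda>w :: 'a pt. fst w / fst (snd w))"
  have Z: "finite Z" "card Z \<ge> 3"
    using \<open>finite Y\<close> \<open>card Y \<ge> 4\<close> Y(3) unfolding Z_def by (simp_all add: card_Diff_singleton)
  have on_f: "form_eval 3 f w = 0" if "w \<in> Y" for w
    using Y(1) that unfolding curve_points_def by blast
  have "form_eval 3 f (t, 1, 0) = 0" if t: "t \<in> slope ` Z" for t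
  proof -
    obtain w where w: "w \<in> Z" "t = slope w" using t by blast
    then obtain x y where xy: "w = (x, y, 0)" "y \<noteq> 0"
      using obtain_line_z0_coords[OF Y(2-4)] unfolding Z_def by blast
    then have "y ^ 3 * form_eval 3 f (t, 1, 0) = form_eval 3 f w"
      using w(2) form_eval_scale[of 3 f y t 1 0] by (simp add: slope_def)
    then show ?thesis using xy(2) on_f w(1) unfolding Z_def by simp
  qed
  moreover have "card (slope ` Z) \<ge> 3"
    using Z(2) inj_on_slope_line_z0[OF Y(2-4)] unfolding Z_def slope_def by (simp add: card_image)
  moreover have "f (3,0,0) = 0" using on_f[OF Y(3)] by (simp add: form_eval_3)
  ultimately have "form_eval 3 f w = dot (0,0,1) w * form_eval 2 (\<lambda>(i, j, k). f (i, j, Suc k)) w" for w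
    using cubic_eq_z_times_if_zeros_on_z0[of f "slope ` Z" w] Z(1) by (simp add: dot_def)
  then show False
    using abs_irreducible_cubic_no_factorization[OF inf irr is_form_dot is_form_form_eval] by blast
qed

theorem card_line_inter_le_3:
  fixes c :: "nat \<times> nat \<times> nat \<Rightarrow> 'a::field"
  assumes inf: "infinite (UNIV :: 'a set)" and irr: "abs_irreducible_cubic c"
    and X: "X \<subseteq> curve_points c" "distinct_proj_points X" "on_plane_curve 1 X"
  shows "card X \<le> 3"
proof (rule ccontr)
  assume "\<not> card X \<le> 3"
  then have "2 \<le> card X" by simp
  then obtain T where "T \<subseteq> X" "card T = 2" by (rule obtain_subset_with_card_n)
  then obtain p q where pq: "p \<in> X" "q \<in> X" "p \<noteq> q" unfolding card_2_iff by blast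
  have "p \<noteq> (0,0,0)" "q \<noteq> (0,0,0)" "\<not> proportional q p"
    using X(2) pq unfolding distinct_proj_points_def by blast+
  then obtain r where det: "det3 p q r \<noteq> 0" by (rule exists_det3_ne_0)
  define Y where "Y = frame_coords p q r ` X"
  obtain f where f: "abs_irreducible_cubic f" "Y \<subseteq> curve_points f" "distinct_proj_points Y"
    "card Y = card X"
    using cubic_points_in_frame_coords[OF inf irr X(1,2) det] unfolding Y_def by blast
  have "frame_coords p q r p \<in> Y" "frame_coords p q r q \<in> Y" using pq unfolding Y_def by blast+
  then have frame: "(1,0,0) \<in> Y" "(0,1,0) \<in> Y" using frame_coords_frame[OF det] by simp_all
  have "on_plane_curve 1 Y"
    unfolding Y_def on_plane_curve_projectivity_iff[OF inf projectivity_frame_coords[OF det]] by (rule X(3))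
  then obtain n where n: "n \<noteq> (0,0,0)" "\<forall>w\<in>Y. dot n w = 0"
    unfolding on_plane_curve_1_iff by blast
  obtain n1 n2 n3 where n_eq: "n = (n1, n2, n3)" by (cases n)
  have "n1 = 0" "n2 = 0" using n(2) frame unfolding n_eq by (auto simp: dot_def)
  then have "\<forall>w\<in>Y. snd (snd w) = 0" using n unfolding n_eq by (simp add: dot_def)
  then have "card Y \<le> 3" using card_le_3_if_on_line_z0[OF inf f(1-3) frame(1)] by blast
  then show False using f(4) \<open>\<not> card X \<le> 3\<close> by simp
qed

definition off_triangle :: "'a::field pt \<Rightarrow> bool" where
  "off_triangle w \<longleftrightarrow> fst w \<noteq> 0 \<and> fst (snd w) \<noteq> 0 \<and> snd (snd w) \<noteq> 0"

text \<open>Conics through the three coordinate points become lines under the quadratic Cremona map.\<close>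

definition cremona :: "'a::field pt \<Rightarrow> 'a pt" where
  "cremona w = (fst (snd w) * snd (snd w), fst w * snd (snd w), fst w * fst (snd w))"

lemma conic_through_frame:
  assumes "on_plane_curve 2 S" "(1,0,0) \<in> S" "(0,1,0) \<in> S" "(0,0,1) \<in> S"
  obtains n where "n \<noteq> (0,0,0)" "\<forall>w\<in>S. dot n (cremona w) = 0"
proof -
  obtain q where q: "nonzero_form 2 q" "\<forall>w\<in>S. form_eval 2 q w = 0"
    using assms(1) unfolding on_plane_curve_def by blast
  have "q (2,0,0) = 0" "q (0,2,0) = 0" "q (0,0,2) = 0"
    using q(2) assms(2-4) by (auto simp: form_eval_2)
  then have q_cremona: "form_eval 2 q w = dot (q (0,1,1), q (1,0,1), q (1,1,0)) (cremona w)" for w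
    by (cases w) (simp add: form_eval_2 dot_def cremona_def algebra_simps)
  have "(q (0,1,1), q (1,0,1), q (1,1,0)) \<noteq> (0,0,0)"
    using q(1) \<open>q (2,0,0) = 0\<close> \<open>q (0,2,0) = 0\<close> \<open>q (0,0,2) = 0\<close>
    unfolding nonzero_form_def mons_2 by auto
  moreover have "\<forall>w\<in>S. dot (q (0,1,1), q (1,0,1), q (1,1,0)) (cremona w) = 0"
    using q(2) by (simp add: q_cremona)
  ultimately show ?thesis by (rule that)
qed

lemma cremona_conic_form:
  obtains q where "\<And>w. form_eval 2 q w = dot n (cremona w)" "n \<noteq> (0,0,0) \<Longrightarrow> nonzero_form 2 q"
proof -
  define q :: "nat \<times> nat \<times> nat \<Rightarrow> _" where
    "q m = (if m = (0,1,1) then fst n else if m = (1,0,1) then fst (snd n)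
      else if m = (1,1,0) then snd (snd n) else 0)" for m
  have "form_eval 2 q w = dot n (cremona w)" for w
    by (cases w) (simp add: form_eval_2 q_def dot_def cremona_def algebra_simps)
  moreover have "nonzero_form 2 q" if "n \<noteq> (0,0,0)"
    using that unfolding nonzero_form_def mons_2 q_def by (cases n) auto
  ultimately show ?thesis using that by blast
qed

lemma on_plane_curve_2_if_cremona:
  assumes "n \<noteq> (0,0,0)" "\<forall>w\<in>S. dot n (cremona w) = 0"
  shows "on_plane_curve 2 S"
  using cremona_conic_form[of n] assms unfolding on_plane_curve_def by metis

lemma proportional_if_proportional_cremona:
  assumes "off_triangle w" "off_triangle w'" "proportional (cremona w) (cremona w')"
  shows "proportional w w'"
proof -
  obtain w1 w2 w3 where w: "w = (w1, w2, w3)" by (cases w)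
  obtain v1 v2 v3 where w': "w' = (v1, v2, v3)" by (cases w')
  obtain k where k: "k \<noteq> 0" "w2 * w3 = k * (v2 * v3)" "w1 * w3 = k * (v1 * v3)" "w1 * w2 = k * (v1 * v2)"
    using assms(3) unfolding proportional_def cremona_def w w' by auto
  have nz: "w1 \<noteq> 0" "w2 \<noteq> 0" "w3 \<noteq> 0" "v1 \<noteq> 0" "v2 \<noteq> 0" "v3 \<noteq> 0"
    using assms(1,2) unfolding off_triangle_def w w' by auto
  have "w2 * (w1 * v3) = w2 * (v1 * w3)"
    using k(2,4) by (metis mult.assoc mult.left_commute)
  then have e1: "w1 * v3 = v1 * w3" using nz by simp
  have "w1 * (w2 * v3) = w1 * (v2 * w3)"
    using k(3,4) by (metis mult.assoc mult.left_commute)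
  then have e2: "w2 * v3 = v2 * w3" using nz by simp
  have "w1 = w3 / v3 * v1" "w2 = w3 / v3 * v2" "w3 = w3 / v3 * v3" "w3 / v3 \<noteq> 0"
    using e1 e2 nz by (simp_all add: field_simps)
  then show ?thesis unfolding proportional_def w w' fst_conv snd_conv by blast
qed

lemma off_triangle_if_no_three_collinear:
  assumes "no_three_collinear Y" "(1,0,0) \<in> Y" "(0,1,0) \<in> Y" "(0,0,1) \<in> Y"
    and "w \<in> Y" "w \<notin> {(1,0,0), (0,1,0), (0,0,1)}"
  shows "off_triangle w"
proof -
  have "fst w \<noteq> 0"
    using no_three_collinearD[OF assms(1,5,3,4), of "(1,0,0)"] assms(6) by (auto simp: dot_def)
  moreover have "fst (snd w) \<noteq> 0"
    using no_three_collinearD[OF assms(1,5,2,4), of "(0,1,0)"] assms(6) by (auto simp: dot_def)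
  moreover have "snd (snd w) \<noteq> 0"
    using no_three_collinearD[OF assms(1,5,2,3), of "(0,0,1)"] assms(6) by (auto simp: dot_def)
  ultimately show ?thesis unfolding off_triangle_def by blast
qed

lemma frame_conic_coeffs_ne_0:
  assumes Y: "no_three_collinear Y" "(1,0,0) \<in> Y" "(0,1,0) \<in> Y" "(0,0,1) \<in> Y"
    and w: "w1 \<in> Y" "w2 \<in> Y" "w1 \<noteq> w2" "w1 \<notin> {(1,0,0), (0,1,0), (0,0,1)}"
      "w2 \<notin> {(1,0,0), (0,1,0), (0,0,1)}"
    and n: "(a, b, c) \<noteq> (0,0,0)" "dot (a, b, c) (cremona w1) = 0" "dot (a, b, c) (cremona w2) = 0"
  shows "a \<noteq> 0" "b \<noteq> 0" "c \<noteq> 0"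
proof -
  have off: "off_triangle w1" "off_triangle w2"
    using off_triangle_if_no_three_collinear[OF Y] w by blast+
  \<comment> \<open>if a coefficient vanishes, the conic contains a line through a coordinate point\<close>
  have line: False if "e \<in> Y" "e \<notin> {w1, w2}" "l \<noteq> (0,0,0)" "dot l e = 0"
    "\<And>w. off_triangle w \<Longrightarrow> dot (a, b, c) (cremona w) = 0 \<Longrightarrow> dot l w = 0" for e l
    using no_three_collinearD[OF Y(1) that(1) w(1,2) _ _ w(3) that(3,4)] that(2,5) off n(2,3) by blast
  show "a \<noteq> 0"
  proof
    assume "a = 0"
    have "dot (0, c, b) w = 0" if "off_triangle w" "dot (a, b, c) (cremona w) = 0" for w
    proof -
      have "fst w * dot (0, c, b) w = dot (a, b, c) (cremona w)"
        using \<open>a = 0\<close> by (simp add: dot_def cremona_def algebra_simps)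
      then show ?thesis using that unfolding off_triangle_def by simp
    qed
    then show False using line[of "(1,0,0)" "(0, c, b)"] Y(2) w(4,5) n(1) \<open>a = 0\<close> by (auto simp: dot_def)
  qed
  show "b \<noteq> 0"
  proof
    assume "b = 0"
    have "dot (c, 0, a) w = 0" if "off_triangle w" "dot (a, b, c) (cremona w) = 0" for w
    proof -
      have "fst (snd w) * dot (c, 0, a) w = dot (a, b, c) (cremona w)"
        using \<open>b = 0\<close> by (simp add: dot_def cremona_def algebra_simps)
      then show ?thesis using that unfolding off_triangle_def by simp
    qed
    then show False using line[of "(0,1,0)" "(c, 0, a)"] Y(3) w(4,5) n(1) \<open>b = 0\<close> by (auto simp: dot_def)
  qed
  show "c \<noteq> 0"
  proof
    assume "c = 0"
    have "dot (b, a, 0) w = 0" if "off_triangle w" "dot (a, b, c) (cremona w) = 0" for w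
    proof -
      have "snd (snd w) * dot (b, a, 0) w = dot (a, b, c) (cremona w)"
        using \<open>c = 0\<close> by (simp add: dot_def cremona_def algebra_simps)
      then show ?thesis using that unfolding off_triangle_def by simp
    qed
    then show False using line[of "(0,0,1)" "(b, a, 0)"] Y(4) w(4,5) n(1) \<open>c = 0\<close> by (auto simp: dot_def)
  qed
qed

lemma cubic_mod_frame_conic:
  fixes f :: "nat \<times> nat \<times> nat \<Rightarrow> 'a::field"
  assumes "f (3,0,0) = 0" "f (0,3,0) = 0" "f (0,0,3) = 0" "a \<noteq> 0" "c \<noteq> 0"
  obtains m r1 r2 r3 r4 where "\<And>x y z. form_eval 3 f (x, y, z) =
    dot (a, b, c) (cremona (x, y, z)) * dot m (x, y, z)
      + (r1 * x^2 * z + r2 * y^2 * z + r3 * x * z^2 + r4 * x * y * z)"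
proof -
  define \<alpha> where "\<alpha> = f (2,1,0) / c"
  define \<beta> where "\<beta> = f (1,2,0) / c"
  define \<gamma> where "\<gamma> = f (0,1,2) / a"
  have "form_eval 3 f (x, y, z) = dot (a, b, c) (cremona (x, y, z)) * dot (\<alpha>, \<beta>, \<gamma>) (x, y, z)
      + ((f (2,0,1) - b * \<alpha>) * x^2 * z + (f (0,2,1) - a * \<beta>) * y^2 * z
         + (f (1,0,2) - b * \<gamma>) * x * z^2 + (f (1,1,1) - (a * \<alpha> + b * \<beta> + c * \<gamma>)) * x * y * z)"
    for x y z
    unfolding form_eval_3 \<alpha>_def \<beta>_def \<gamma>_def using assms
    by (simp add: dot_def cremona_def field_simps power2_eq_square power3_eq_cube)
  then show ?thesis using that by blast
qed

lemma remainder_root_on_frame_conic: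
  fixes a b c x y z :: "'a::field"
  assumes "x \<noteq> 0" "y \<noteq> 0" "c \<noteq> 0"
    and conic: "dot (a, b, c) (cremona (x, y, z)) = 0"
    and rem: "r1 * x^2 * z + r2 * y^2 * z + r3 * x * z^2 + r4 * x * y * z = 0"
  shows "- b * r1 + (- a * r1 + c * r3 - b * r4) * (y / x) + (- b * r2 - a * r4) * (y / x)^2
     + (- a * r2) * (y / x)^3 = 0"
proof -
  \<comment> \<open>on the conic \<open>z (a y + b x) = - c x y\<close>; multiply the remainder by \<open>(a y + b x)\<^sup>2\<close> to eliminate \<open>z\<close>\<close>
  define K where "K = z * (a * y + b * x)"
  define M where "M = r1 * x^2 + r2 * y^2 + r4 * x * y"
  have K: "K = - c * x * y"
    using conic unfolding K_def by (simp add: dot_def cremona_def algebra_simps eq_neg_iff_add_eq_0)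
  have "(r1 * x^2 * z + r2 * y^2 * z + r3 * x * z^2 + r4 * x * y * z) * (a * y + b * x)^2
      = K * (M * (a * y + b * x) + r3 * x * K)"
    unfolding K_def M_def by (simp add: algebra_simps power2_eq_square)
  then have "(- c * x * y) * (M * (a * y + b * x) + r3 * x * (- c * x * y)) = 0"
    using rem K by simp
  then have "M * (a * y + b * x) + r3 * x * (- c * x * y) = 0" using assms(1-3) by simp
  moreover have "M * (a * y + b * x) + r3 * x * (- c * x * y) =
     - ((- b * r1 + (- a * r1 + c * r3 - b * r4) * (y / x) + (- b * r2 - a * r4) * (y / x)^2
     + (- a * r2) * (y / x)^3) * x^3)"
    unfolding M_def using assms(1) by (simp add: field_simps power2_eq_square power3_eq_cube)
  ultimately show ?thesis using assms(1) by simp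
qed

lemma proportional_if_same_slope_on_frame_conic:
  assumes "off_triangle w" "off_triangle w'" "c \<noteq> 0"
    and "dot (a, b, c) (cremona w) = 0" "dot (a, b, c) (cremona w') = 0"
    and "fst (snd w) / fst w = fst (snd w') / fst w'"
  shows "proportional w' w"
proof -
  obtain x1 x2 x3 where w: "w = (x1, x2, x3)" by (cases w)
  obtain y1 y2 y3 where w': "w' = (y1, y2, y3)" by (cases w')
  have x: "x1 \<noteq> 0" "x2 \<noteq> 0" "x3 \<noteq> 0" "x3 * (a * x2 + b * x1) = - (c * x1 * x2)"
    using assms(1,4) unfolding w off_triangle_def
    by (simp_all add: dot_def cremona_def algebra_simps eq_neg_iff_add_eq_0)
  have y: "y1 \<noteq> 0" "y2 \<noteq> 0" "y3 * (a * y2 + b * y1) = - (c * y1 * y2)"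
    using assms(2,5) unfolding w' off_triangle_def
    by (simp_all add: dot_def cremona_def algebra_simps eq_neg_iff_add_eq_0)
  define k where "k = y1 / x1"
  have k: "k \<noteq> 0" "y1 = k * x1" "y2 = k * x2"
    using x y assms(6) unfolding k_def w w' by (simp_all add: field_simps)
  have nz: "a * x2 + b * x1 \<noteq> 0" using x assms(3) by auto
  have "y3 * (k * (a * x2 + b * x1)) = y3 * (a * y2 + b * y1)"
    using k by (simp add: algebra_simps)
  also have "\<dots> = k * k * (- (c * x1 * x2))" using k y(3) by (simp add: algebra_simps)
  also have "\<dots> = (k * x3) * (k * (a * x2 + b * x1))" unfolding x(4)[symmetric] by (simp add: algebra_simps)
  finally have "y3 * (k * (a * x2 + b * x1)) = (k * x3) * (k * (a * x2 + b * x1))" .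
  then have "y3 = k * x3" using k(1) nz by simp
  then show ?thesis unfolding proportional_def w w' using k by auto
qed

lemma cubic_eq_frame_conic_times_linear:
  fixes f :: "nat \<times> nat \<times> nat \<Rightarrow> 'a::field"
  assumes abc: "a \<noteq> 0" "b \<noteq> 0" "c \<noteq> 0"
    and f0: "f (3,0,0) = 0" "f (0,3,0) = 0" "f (0,0,3) = 0"
    and W: "finite W" "card W \<ge> 4"
      "\<forall>w\<in>W. off_triangle w \<and> dot (a, b, c) (cremona w) = 0 \<and> form_eval 3 f w = 0"
      "\<forall>w\<in>W. \<forall>w'\<in>W. proportional w w' \<longrightarrow> w = w'"
  shows "\<exists>m. \<forall>w. form_eval 3 f w = dot (a, b, c) (cremona w) * dot m w"
proof -
  obtain m r1 r2 r3 r4 where decomp: "\<And>x y z. form_eval 3 f (x, y, z) =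
    dot (a, b, c) (cremona (x, y, z)) * dot m (x, y, z)
      + (r1 * x^2 * z + r2 * y^2 * z + r3 * x * z^2 + r4 * x * y * z)"
    using cubic_mod_frame_conic[OF f0 abc(1,3)] by blast
  define slope where "slope = (\<lambda>w :: 'a pt. fst (snd w) / fst w)"
  define P where "P i = (if i = 0 then - b * r1 else if i = 1 then - a * r1 + c * r3 - b * r4
     else if i = 2 then - b * r2 - a * r4 else - a * r2)" for i :: nat
  have P_sum: "(\<Sum>i\<le>3. P i * s ^ i) = P 0 + P 1 * s + P 2 * s^2 + P 3 * s^3" for s
    by (simp add: numeral_3_eq_3 numeral_2_eq_2 atMost_Suc)
  have "(\<Sum>i\<le>3. P i * s ^ i) = 0" if "s \<in> slope ` W" for s
  proof -
    obtain w where w: "w \<in> W" "s = slope w" using \<open>s \<in> slope ` W\<close> by blast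
    obtain x y z where xyz: "w = (x, y, z)" by (cases w)
    have "off_triangle w" "dot (a, b, c) (cremona (x, y, z)) = 0" "form_eval 3 f (x, y, z) = 0"
      using W(3) w(1) xyz by auto
    then have "x \<noteq> 0" "y \<noteq> 0" "dot (a, b, c) (cremona (x, y, z)) = 0"
      "r1 * x^2 * z + r2 * y^2 * z + r3 * x * z^2 + r4 * x * y * z = 0"
      using decomp[of x y z] xyz unfolding off_triangle_def by auto
    from remainder_root_on_frame_conic[OF this(1,2) abc(3) this(3,4)] show ?thesis
      unfolding P_sum using w(2) xyz by (simp add: P_def slope_def)
  qed
  moreover have "inj_on slope W"
  proof (rule inj_onI)
    fix w w' assume "w \<in> W" "w' \<in> W" "slope w = slope w'"
    then have "proportional w' w"
      using proportional_if_same_slope_on_frame_conic[OF _ _ abc(3)] W(3) unfolding slope_def by blast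
    then show "w = w'" using W(4) \<open>w \<in> W\<close> \<open>w' \<in> W\<close> by blast
  qed
  ultimately have "P i = 0" if "i \<le> 3" for i
    using coeffs_eq_0_if_many_roots[of "slope ` W" 3 P i] W(1,2) that by (simp add: card_image)
  from this[of 0] this[of 1] this[of 2] this[of 3] have "r1 = 0" "r2 = 0" "r3 = 0" "r4 = 0"
    using abc by (simp_all add: P_def)
  then have "form_eval 3 f w = dot (a, b, c) (cremona w) * dot m w" for w
    using decomp[of "fst w" "fst (snd w)" "snd (snd w)"] by simp
  then show ?thesis by blast
qed

lemma card_le_6_if_on_frame_conic:
  fixes f :: "nat \<times> nat \<times> nat \<Rightarrow> 'a::field"
  assumes inf: "infinite (UNIV :: 'a set)" and irr: "abs_irreducible_cubic f"
    and Y: "Y \<subseteq> curve_points f" "distinct_proj_points Y" "no_three_collinear Y" "on_plane_curve 2 Y"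
      "(1,0,0) \<in> Y" "(0,1,0) \<in> Y" "(0,0,1) \<in> Y"
  shows "card Y \<le> 6"
proof (rule ccontr)
  assume "\<not> card Y \<le> 6"
  then have "finite Y" "card Y \<ge> 7" by (auto intro: card_ge_0_finite)
  define W where "W = Y - {(1,0,0), (0,1,0), (0,0,1)}"
  have "card W = card Y - 3"
    unfolding W_def using Y(5-7) \<open>finite Y\<close> by (subst card_Diff_subset) auto
  then have W: "finite W" "card W \<ge> 4" using \<open>finite Y\<close> \<open>card Y \<ge> 7\<close> unfolding W_def by auto
  then obtain T where "T \<subseteq> W" "card T = 2" using obtain_subset_with_card_n[of 2 W] by auto
  then obtain w1 w2 where w: "w1 \<in> W" "w2 \<in> W" "w1 \<noteq> w2" unfolding card_2_iff by blast
  obtain n where n: "n \<noteq> (0,0,0)" "\<forall>w\<in>Y. dot n (cremona w) = 0"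
    using conic_through_frame[OF Y(4-7)] by blast
  obtain a b c where n_eq: "n = (a, b, c)" by (cases n)
  have in_W: "w \<in> Y" "w \<notin> {(1,0,0), (0,1,0), (0,0,1)}" if "w \<in> W" for w
    using that unfolding W_def by blast+
  have "(a, b, c) \<noteq> (0,0,0)" "dot (a, b, c) (cremona w1) = 0" "dot (a, b, c) (cremona w2) = 0"
    using n in_W(1) w(1,2) unfolding n_eq by auto
  note abc = frame_conic_coeffs_ne_0[OF Y(3,5-7) in_W(1)[OF w(1)] in_W(1)[OF w(2)] w(3)
      in_W(2)[OF w(1)] in_W(2)[OF w(2)] this]
  have f0: "f (3,0,0) = 0" "f (0,3,0) = 0" "f (0,0,3) = 0"
    using Y(1,5-7) unfolding curve_points_def by (auto simp: form_eval_3)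
  have W_on: "\<forall>w\<in>W. off_triangle w \<and> dot (a, b, c) (cremona w) = 0 \<and> form_eval 3 f w = 0"
  proof
    fix w assume "w \<in> W"
    then show "off_triangle w \<and> dot (a, b, c) (cremona w) = 0 \<and> form_eval 3 f w = 0"
      using off_triangle_if_no_three_collinear[OF Y(3,5-7) in_W[OF \<open>w \<in> W\<close>]] n(2) Y(1) in_W(1)
      unfolding n_eq curve_points_def by blast
  qed
  have "\<forall>w\<in>W. \<forall>w'\<in>W. proportional w w' \<longrightarrow> w = w'"
    using Y(2) in_W(1) unfolding distinct_proj_points_def by blast
  then obtain m where m: "\<forall>w. form_eval 3 f w = dot (a, b, c) (cremona w) * dot m w"
    using cubic_eq_frame_conic_times_linear[OF abc f0 W W_on] by blast
  obtain q where q: "\<And>w. form_eval 2 q w = dot (a, b, c) (cremona w)"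
    using cremona_conic_form[of "(a, b, c)"] by metis
  have "form_eval 3 f w = dot m w * form_eval 2 q w" for w
    unfolding m[rule_format] q by (rule mult.commute)
  then show False
    using abs_irreducible_cubic_no_factorization[OF inf irr is_form_dot is_form_form_eval] by blast
qed

lemma obtain_three_points:
  assumes "3 \<le> card X"
  obtains p q r where "p \<in> X" "q \<in> X" "r \<in> X" "p \<noteq> q" "p \<noteq> r" "q \<noteq> r"
proof -
  obtain T where "T \<subseteq> X" "card T = 3" using obtain_subset_with_card_n[OF assms] by blast
  moreover from \<open>card T = 3\<close> obtain p q r where "T = {p, q, r}" "p \<noteq> q" "q \<noteq> r" "p \<noteq> r"
    unfolding card_3_iff by blast
  ultimately show ?thesis by (intro that[of p q r]) auto
qed

theorem card_conic_inter_le_6: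
  fixes c :: "nat \<times> nat \<times> nat \<Rightarrow> 'a::field"
  assumes inf: "infinite (UNIV :: 'a set)" and irr: "abs_irreducible_cubic c"
    and X: "X \<subseteq> curve_points c" "distinct_proj_points X" "on_plane_curve 2 X" "no_three_collinear X"
  shows "card X \<le> 6"
proof (rule ccontr)
  assume "\<not> card X \<le> 6"
  then have "3 \<le> card X" by simp
  then obtain p q r where pqr: "p \<in> X" "q \<in> X" "r \<in> X" "p \<noteq> q" "p \<noteq> r" "q \<noteq> r"
    by (rule obtain_three_points)
  have det: "det3 p q r \<noteq> 0" using det3_ne_0_if_no_three_collinear[OF X(4,2) pqr] .
  note proj = projectivity_frame_coords[OF det]
  define Y where "Y = frame_coords p q r ` X"
  obtain f where f: "abs_irreducible_cubic f" "Y \<subseteq> curve_points f" "distinct_proj_points Y"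
    "card Y = card X"
    using cubic_points_in_frame_coords[OF inf irr X(1,2) det] unfolding Y_def by blast
  have "frame_coords p q r p \<in> Y" "frame_coords p q r q \<in> Y" "frame_coords p q r r \<in> Y"
    using pqr unfolding Y_def by blast+
  then have frame: "(1,0,0) \<in> Y" "(0,1,0) \<in> Y" "(0,0,1) \<in> Y" using frame_coords_frame[OF det] by simp_all
  have "no_three_collinear Y" unfolding Y_def by (rule no_three_collinear_projectivity[OF inf proj X(4)])
  moreover have "on_plane_curve 2 Y"
    unfolding Y_def on_plane_curve_projectivity_iff[OF inf proj] by (rule X(3))
  ultimately have "card Y \<le> 6" by (rule card_le_6_if_on_frame_conic[OF inf f(1-3) _ _ frame])
  then show False using f(4) \<open>\<not> card X \<le> 6\<close> by simp
qed

lemma cremona_ne_0: "off_triangle w \<Longrightarrow> cremona w \<noteq> (0,0,0)"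
  by (simp add: off_triangle_def cremona_def)

lemma on_frame_conic_if_all_but_one_on_conics:
  assumes Y: "finite Y" "card Y \<ge> 7" "distinct_proj_points Y" "no_three_collinear Y"
      "(1,0,0) \<in> Y" "(0,1,0) \<in> Y" "(0,0,1) \<in> Y"
    and conics: "\<forall>y\<in>Y. on_plane_curve 2 (Y - {y})"
  shows "on_plane_curve 2 Y"
proof -
  define E :: "'a::field pt set" where "E = {(1,0,0), (0,1,0), (0,0,1)}"
  define W where "W = Y - E"
  have "card W = card Y - 3"
    unfolding W_def E_def using Y(1,5-7) by (subst card_Diff_subset) auto
  then have W: "finite W" "card W \<ge> 4" using Y(1,2) unfolding W_def by auto
  have in_W: "w \<in> Y" "w \<notin> E" "off_triangle w" if "w \<in> W" for w
    using that off_triangle_if_no_three_collinear[OF Y(4-7)] unfolding W_def E_def by blast+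
  obtain T where "T \<subseteq> W" "card T = 2" using obtain_subset_with_card_n[of 2 W] W(2) by auto
  then obtain w4 w5 where w45: "w4 \<in> W" "w5 \<in> W" "w4 \<noteq> w5" unfolding card_2_iff by blast
  have "\<not> proportional (cremona w5) (cremona w4)"
    using proportional_if_proportional_cremona[OF in_W(3) in_W(3)] w45 in_W(1) Y(3)
    unfolding distinct_proj_points_def by blast
  then have n: "cross (cremona w4) (cremona w5) \<noteq> (0,0,0)"
    using cross_ne_0 cremona_ne_0 in_W(3) w45(1,2) by blast
  have on_W: "dot (cross (cremona w4) (cremona w5)) (cremona w) = 0" if "w \<in> W" for w
  proof -
    have "card {w4, w5, w} < card W" using card_length[of "[w4, w5, w]"] W(2) by simp
    then have "\<not> W \<subseteq> {w4, w5, w}" using card_mono[of "{w4, w5, w}" W] by auto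
    then obtain w' where w': "w' \<in> W" "w' \<notin> {w4, w5, w}" by blast
    then have "(1,0,0) \<in> Y - {w'}" "(0,1,0) \<in> Y - {w'}" "(0,0,1) \<in> Y - {w'}"
      using Y(5-7) in_W(2) unfolding E_def by auto
    then obtain m where m: "m \<noteq> (0,0,0)" "\<forall>v\<in>Y - {w'}. dot m (cremona v) = 0"
      using conic_through_frame conics in_W(1)[OF w'(1)] by metis
    have "w4 \<in> Y - {w'}" "w5 \<in> Y - {w'}" "w \<in> Y - {w'}"
      using w' w45 that in_W(1) by blast+
    then have "det3 (cremona w4) (cremona w5) (cremona w) = 0"
      using m by (intro det3_eq_0_if_common_line[of m]) blast+
    then show ?thesis by (simp add: det3_def)
  qed
  have "cremona e = (0,0,0)" if "e \<in> E" for e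
    using that unfolding E_def by (auto simp: cremona_def)
  then have on_E: "dot (cross (cremona w4) (cremona w5)) (cremona e) = 0" if "e \<in> E" for e
    using that by (simp add: dot_def)
  have "Y = W \<union> E" unfolding W_def E_def using Y(5-7) by blast
  then show ?thesis using on_plane_curve_2_if_cremona[OF n] on_W on_E by blast
qed

theorem on_conic_if_all_but_one_on_conics:
  fixes X :: "'a::field pt set"
  assumes inf: "infinite (UNIV :: 'a set)"
    and X: "finite X" "card X \<ge> 7" "distinct_proj_points X" "no_three_collinear X"
    and conics: "\<forall>x\<in>X. on_plane_curve 2 (X - {x})"
  shows "on_plane_curve 2 X"
proof -
  have "3 \<le> card X" using X(2) by simp
  then obtain p q r where pqr: "p \<in> X" "q \<in> X" "r \<in> X" "p \<noteq> q" "p \<noteq> r" "q \<noteq> r"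
    by (rule obtain_three_points)
  have det: "det3 p q r \<noteq> 0" using det3_ne_0_if_no_three_collinear[OF X(4,3) pqr] .
  note proj = projectivity_frame_coords[OF det]
  define \<phi> where "\<phi> = frame_coords p q r"
  have inj: "inj \<phi>" unfolding \<phi>_def by (rule projectivity_inj[OF proj])
  have "\<phi> p \<in> \<phi> ` X" "\<phi> q \<in> \<phi> ` X" "\<phi> r \<in> \<phi> ` X" using pqr by blast+
  then have frame: "(1,0,0) \<in> \<phi> ` X" "(0,1,0) \<in> \<phi> ` X" "(0,0,1) \<in> \<phi> ` X"
    using frame_coords_frame[OF det] unfolding \<phi>_def by simp_all
  have "\<forall>y\<in>\<phi> ` X. on_plane_curve 2 (\<phi> ` X - {y})"
  proof
    fix y assume "y \<in> \<phi> ` X"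
    then obtain x where "x \<in> X" "y = \<phi> x" by blast
    then have "\<phi> ` X - {y} = \<phi> ` (X - {x})" using inj by (simp add: image_set_diff)
    then show "on_plane_curve 2 (\<phi> ` X - {y})"
      using conics \<open>x \<in> X\<close> on_plane_curve_projectivity_iff[OF inf proj] unfolding \<phi>_def by simp
  qed
  moreover have "finite (\<phi> ` X)" "card (\<phi> ` X) \<ge> 7"
    using X(1,2) card_image[OF inj_on_subset[OF inj]] by simp_all
  moreover have "distinct_proj_points (\<phi> ` X)" "no_three_collinear (\<phi> ` X)"
    unfolding \<phi>_def using distinct_proj_points_projectivity[OF proj X(3)]
      no_three_collinear_projectivity[OF inf proj X(4)] by blast+
  ultimately have "on_plane_curve 2 (\<phi> ` X)"
    using on_frame_conic_if_all_but_one_on_conics frame by blast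
  then show ?thesis unfolding \<phi>_def on_plane_curve_projectivity_iff[OF inf proj] .
qed

section \<open>The Galois action\<close>

lemma field_aut_0: "field_aut \<sigma> \<Longrightarrow> \<sigma> 0 = 0"
  unfolding field_aut_def by (metis add_0 add_cancel_right_right)

lemma field_aut_eq_0_iff: "field_aut \<sigma> \<Longrightarrow> \<sigma> x = 0 \<longleftrightarrow> x = 0"
  using field_aut_0[of \<sigma>] unfolding field_aut_def bij_def inj_def by metis

lemma field_aut_1: "field_aut \<sigma> \<Longrightarrow> \<sigma> 1 = 1"
  using field_aut_eq_0_iff[of \<sigma> 1] unfolding field_aut_def by (metis mult_1 mult_cancel_left1)

lemma field_aut_power: "field_aut \<sigma> \<Longrightarrow> \<sigma> (x ^ n) = \<sigma> x ^ n"
  by (induction n) (auto simp: field_aut_1 field_aut_def)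

lemma field_aut_sum: "field_aut \<sigma> \<Longrightarrow> \<sigma> (\<Sum>x\<in>A. f x) = (\<Sum>x\<in>A. \<sigma> (f x))"
  by (induction A rule: infinite_finite_induct) (auto simp: field_aut_0 field_aut_def)

lemma field_aut_form_eval:
  assumes "field_aut \<sigma>"
  shows "\<sigma> (form_eval d c v) = form_eval d (\<sigma> \<circ> c) (pt_map \<sigma> v)"
  unfolding form_eval_monom_at field_aut_sum[OF assms] using assms
  by (intro sum.cong refl) (simp add: field_aut_def monom_at_def pt_map_def field_aut_power)

lemma nonzero_form_field_aut: "field_aut \<sigma> \<Longrightarrow> nonzero_form d c \<Longrightarrow> nonzero_form d (\<sigma> \<circ> c)"
  using field_aut_eq_0_iff unfolding nonzero_form_def by fastforce

lemma on_plane_curve_gal_image: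
  assumes "\<pi> \<in> gal_image K B" "S \<subseteq> B" "on_plane_curve d S"
  shows "on_plane_curve d (\<pi> ` S)"
proof -
  obtain \<sigma> where \<sigma>: "field_aut \<sigma>" "\<forall>b\<in>B. proportional (pt_map \<sigma> b) (\<pi> b)"
    using assms(1) unfolding gal_image_def Gal_def by blast
  obtain f where f: "nonzero_form d f" "\<forall>v\<in>S. form_eval d f v = 0"
    using assms(3) unfolding on_plane_curve_def by blast
  have "form_eval d (\<sigma> \<circ> f) (\<pi> b) = 0" if "b \<in> S" for b
  proof (rule form_eval_eq_0_if_proportional)
    show "proportional (pt_map \<sigma> b) (\<pi> b)" using \<sigma>(2) assms(2) that by blast
    show "form_eval d (\<sigma> \<circ> f) (pt_map \<sigma> b) = 0"
      using field_aut_form_eval[OF \<sigma>(1), of d f b] f(2) that field_aut_0[OF \<sigma>(1)] by simp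
  qed
  then show ?thesis
    using nonzero_form_field_aut[OF \<sigma>(1) f(1)] unfolding on_plane_curve_def by blast
qed

lemma obtain_three_cycle:
  assumes "a \<in> B" "b \<in> B" "c \<in> B" "a \<noteq> b" "a \<noteq> c" "b \<noteq> c"
  obtains \<pi> where "\<pi> permutes B" "evenperm \<pi>" "\<pi> a = b" "\<And>x. x \<notin> {a, b, c} \<Longrightarrow> \<pi> x = x"
proof
  show "(transpose a c \<circ> transpose a b) permutes B"
    using assms by (intro permutes_compose permutes_swap_id)
  show "evenperm (transpose a c \<circ> transpose a b)"
    using assms by (simp add: evenperm_comp permutation_swap_id evenperm_swap)
  show "(transpose a c \<circ> transpose a b) a = b" using assms by simp
  show "(transpose a c \<circ> transpose a b) x = x" if "x \<notin> {a, b, c}" for x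
    using that by simp
qed

lemma on_line_if_collinear_with_two:
  assumes "p \<noteq> (0,0,0)" "q \<noteq> (0,0,0)" "\<not> proportional q p"
    and "\<forall>x\<in>S. on_plane_curve 1 {p, q, x}"
  shows "on_plane_curve 1 S"
proof -
  have "dot (cross p q) x = 0" if x: "x \<in> S" for x
  proof -
    obtain n where "n \<noteq> (0,0,0)" "dot n p = 0" "dot n q = 0" "dot n x = 0"
      using assms(4) x unfolding on_plane_curve_1_iff by blast
    then show ?thesis using det3_eq_0_if_common_line unfolding det3_def by blast
  qed
  then show ?thesis unfolding on_plane_curve_1_iff using cross_ne_0[OF assms(1-3)] by blast
qed

theorem no_three_collinear_if_alternating:
  fixes c :: "nat \<times> nat \<times> nat \<Rightarrow> 'a::field"
  assumes inf: "infinite (UNIV :: 'a set)" and irr: "abs_irreducible_cubic c"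
    and B: "B \<subseteq> curve_points c" "distinct_proj_points B" "finite B" "card B \<ge> 5"
    and alt: "{\<pi>. \<pi> permutes B \<and> evenperm \<pi>} \<subseteq> gal_image K B"
  shows "no_three_collinear B"
  unfolding no_three_collinear_def
proof (intro allI impI notI)
  fix S assume S: "S \<subseteq> B" "card S = 3" "on_plane_curve 1 S"
  from S(2) obtain p q r where pqr: "S = {p, q, r}" "p \<noteq> q" "q \<noteq> r" "p \<noteq> r"
    unfolding card_3_iff by blast
  have in_B: "p \<in> B" "q \<in> B" "r \<in> B" using S(1) pqr(1) by simp_all
  have "on_plane_curve 1 {p, q, x}" if x: "x \<in> B" for x
  proof (cases "x \<in> S")
    case True
    then have "{p, q, x} \<subseteq> S" using pqr(1) by simp
    then show ?thesis using S(3) by (rule on_plane_curve_subset)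
  next
    case False
    have "card {p, q, r, x} < card B" using card_length[of "[p, q, r, x]"] B(4) by simp
    then have "\<not> B \<subseteq> {p, q, r, x}" using card_mono[of "{p, q, r, x}" B] by auto
    then obtain y where y: "y \<in> B" "y \<notin> {p, q, r, x}" by blast
    have distinct: "r \<noteq> x" "r \<noteq> y" "x \<noteq> y" using False y pqr(1) by auto
    obtain \<pi> where \<pi>: "\<pi> permutes B" "evenperm \<pi>" "\<pi> r = x" "\<And>z. z \<notin> {r, x, y} \<Longrightarrow> \<pi> z = z"
      using obtain_three_cycle[OF in_B(3) x y(1) distinct] by blast
    have "p \<notin> {r, x, y}" "q \<notin> {r, x, y}" using pqr False y by auto
    then have "\<pi> ` S = {p, q, x}" using \<pi>(3,4) pqr(1) by simp
    moreover have "\<pi> \<in> gal_image K B" using alt \<pi>(1,2) by blast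
    ultimately show ?thesis using on_plane_curve_gal_image[OF _ S(1,3)] by metis
  qed
  moreover have "p \<noteq> (0,0,0)" "q \<noteq> (0,0,0)" "\<not> proportional q p"
    using B(2) in_B pqr(2) unfolding distinct_proj_points_def by blast+
  ultimately have "on_plane_curve 1 B" using on_line_if_collinear_with_two[of p q B] by blast
  then have "card B \<le> 3" by (rule card_line_inter_le_3[OF inf irr B(1,2)])
  then show False using B(4) by simp
qed

theorem not_six_on_conic_if_alternating:
  fixes c :: "nat \<times> nat \<times> nat \<Rightarrow> 'a::field"
  assumes inf: "infinite (UNIV :: 'a set)" and irr: "abs_irreducible_cubic c"
    and B: "B \<subseteq> curve_points c" "distinct_proj_points B" "finite B" "card B = 7" "no_three_collinear B"
    and alt: "{\<pi>. \<pi> permutes B \<and> evenperm \<pi>} \<subseteq> gal_image K B"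
    and S: "S \<subseteq> B" "card S = 6"
  shows "\<not> on_plane_curve 2 S"
proof
  assume on_S: "on_plane_curve 2 S"
  have "card (B - S) = 1" using S B(3,4) by (simp add: card_Diff_subset finite_subset)
  then obtain x0 where "B - S = {x0}" by (auto simp: card_1_singleton_iff)
  then have x0: "x0 \<in> B" "S = B - {x0}" using S(1) by auto
  have "on_plane_curve 2 (B - {y})" if y: "y \<in> B" for y
  proof (cases "y = x0")
    case True
    then show ?thesis using on_S x0(2) by simp
  next
    case False
    have "card {x0, y} < card B" using card_length[of "[x0, y]"] B(4) by simp
    then have "\<not> B \<subseteq> {x0, y}" using card_mono[of "{x0, y}" B] by auto
    then obtain w where w: "w \<in> B" "w \<notin> {x0, y}" by blast
    have distinct: "x0 \<noteq> y" "x0 \<noteq> w" "y \<noteq> w" using False w by auto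
    obtain \<pi> where \<pi>: "\<pi> permutes B" "evenperm \<pi>" "\<pi> x0 = y"
      using obtain_three_cycle[OF x0(1) y w(1) distinct] by blast
    have "\<pi> ` S = B - {y}"
      unfolding x0(2) using \<pi>(3) permutes_image[OF \<pi>(1)] permutes_inj[OF \<pi>(1)]
      by (simp add: image_set_diff)
    moreover have "\<pi> \<in> gal_image K B" using alt \<pi>(1,2) by blast
    ultimately show ?thesis using on_plane_curve_gal_image[OF _ S(1) on_S] by metis
  qed
  then have "on_plane_curve 2 B"
    using on_conic_if_all_but_one_on_conics[OF inf B(3) _ B(2,5)] B(4) by simp
  then have "card B \<le> 6" by (rule card_conic_inter_le_6[OF inf irr B(1,2) _ B(5)])
  then show False using B(4) by simp
qed

theorem proposition5p1:
  fixes K :: "'a::field set"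
    and c :: "nat \<times> nat \<times> nat \<Rightarrow> 'a"
    and B :: "'a pt set"
  assumes "is_algebraic_closure_of K"
    and "perfect_subfield K"
    and "(2::'a) \<noteq> 0"
    and "\<forall>m. c m \<in> K"
    and "abs_irreducible_cubic c"
    and "B \<subseteq> curve_points c"
    and "distinct_proj_points B"
    and "card B = 7"
    and "gal_orbit K B"
    and "gal_image K B = {\<pi>. \<pi> permutes B} \<or>
         gal_image K B = {\<pi>. \<pi> permutes B \<and> evenperm \<pi>}"
  shows "general_position B"
proof -
  have inf: "infinite (UNIV :: 'a set)"
    using assms(1) algebraically_closed_infinite unfolding is_algebraic_closure_of_def by blast
  have alt: "{\<pi>. \<pi> permutes B \<and> evenperm \<pi>} \<subseteq> gal_image K B" using assms(10) by blast
  have fin: "finite B" using assms(8) by (simp add: card_ge_0_finite)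
  have "no_three_collinear B"
    using no_three_collinear_if_alternating[OF inf assms(5-7) fin _ alt] assms(8) by simp
  then show ?thesis
    unfolding general_position_iff
    using not_six_on_conic_if_alternating[OF inf assms(5-7) fin assms(8) _ alt] by blast
qed

end
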